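(* $M_A^{0,0}/\nabla(M_A^{1,1})\cong\mathbb C$ (the one-dimensional trivial $\mathfrak g$-module), and $\ker(\nabla:M_A^{1,1}\to M_A^{0,0})=\nabla(M_A^{2,2})$.
   Context: Let $\Lambda(4)$ be the Grassmann superalgebra on odd generators $\xi_1,\dots,\xi_4$; $\xi_I=\xi_{i_1}\cdots\xi_{i_r}$, $\xi_{ij}=\xi_i\xi_j$. Let $K(1,4)_+=\mathbb C[t]\otimes\Lambda(4)$ with bracket $[f,g]=(2f-\sum_i\xi_i\partial_{\xi_i}f)\partial_tg-\partial_tf\,(2g-\sum_i\xi_i\partial_{\xi_i}g)+(-1)^{p(f)}\sum_i\partial_{\xi_i}f\,\partial_{\xi_i}g$, and $\mathfrak g=K(1,4)_+\oplus\mathbb CC$ the central extension by the 2-cocycle $\psi$ whose only nonzero values on the basis $\{t^m\xi_I\}$ are (up to skew-symmetry) $\psi(1,\xi_1\xi_2\xi_3\xi_4)=-2$, $\psi(\xi_i,\partial_{\xi_i}(\xi_1\xi_2\xi_3\xi_4))=-1$. Grade by $\deg t^m\xi_I=2m+|I|-2$, $\deg C=0$; $\mathfrak g_0=\langle C,t,\xi_{ij}\rangle$. Let $\eta_i$ be the image of $\xi_i$ in $U(\mathfrak g_{<0})$; $w_{11}=\eta_2+i\eta_1$, $w_{22}=\eta_2-i\eta_1$, $w_{12}=-\eta_4+i\eta_3$, $w_{21}=\eta_4+i\eta_3$. $\mathfrak g_0^{ss}$ is spanned by $e_x=\frac12(-\xi_{13}-\xi_{24}-i\xi_{14}+i\xi_{23})$,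 $f_x=\frac12(\xi_{13}+\xi_{24}-i\xi_{14}+i\xi_{23})$, $h_x=-i\xi_{12}+i\xi_{34}$, $e_y=\frac12(-\xi_{13}+\xi_{24}+i\xi_{14}+i\xi_{23})$, $f_y=\frac12(\xi_{13}-\xi_{24}+i\xi_{14}+i\xi_{23})$, $h_y=-i\xi_{12}-i\xi_{34}$, identified with $x_1\partial_{x_2},x_2\partial_{x_1},x_1\partial_{x_1}-x_2\partial_{x_2},y_1\partial_{y_2},y_2\partial_{y_1},y_1\partial_{y_1}-y_2\partial_{y_2}$ acting on $V_A=\mathbb C[x_1,x_2,y_1,y_2]$ as differential operators. $t$ acts on $V_A$ as $-\frac12(E_x+E_y)$ and $C$ as $\frac12(E_x-E_y)$, where $E_x=x_1\partial_{x_1}+x_2\partial_{x_2}$, $E_y=y_1\partial_{y_1}+y_2\partial_{y_2}$. Let $V_A^{m,n}$ be the space of polynomials of bidegree $(m,n)$ in $(x,y)$ (so $V_A^{0,0}\cong F(0,0,0,0)$), and $M_A^{m,n}=U(\mathfrak g)\otimes_{U(\mathfrak g_{\ge0})}V_A^{m,n}\cong U(\mathfrak g_{<0})\otimes V_A^{m,n}$ ($\mathfrak g_{>0}$ acting trivially). Define $\nabla:M_A^{m,n}\to M_A^{m-1,n-1}$ by $\nabla(u\otimes v)=\sum_{a,b\in\{1,2\}}uw_{ab}\otimes\frac{\partial^2v}{\partial x_a\partial y_b}$; it is a homomorphism of $\mathfrak g$-modules. *)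

theory Defs
  imports Complex_Main "HOL-Library.Function_Algebras"
begin

section \<open>Concrete model of M_A^{m,n} = U(g_{<0}) \<otimes> V_A^{m,n}\<close>

text \<open>U(g_{<0}) has PBW basis Theta^k eta_I (k a natural number, I a subset of {1..4},
  eta_I the ordered product), where Theta is the image of the element 1 (= t^0) of g.
  In U(g_{<0}) one has [eta_i,eta_j] = -delta_ij Theta (since [xi_i,xi_j] = -delta_ij and
  psi(xi_i,xi_j) = 0) and Theta is central.  A basis vector of M_A^{m,n} is
  Theta^k eta_I \<otimes> x1^p1 x2^p2 y1^q1 y2^q2, encoded by the key (k, I, (p1,p2,q1,q2)).
  Elements are coefficient functions on keys (finitely supported for genuine elements).\<close>

type_synonym mon = "nat \<times> nat \<times> nat \<times> nat"
type_synonym key = "nat \<times> nat set \<times> mon"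
type_synonym elt = "key \<Rightarrow> complex"

definition sc :: "complex \<Rightarrow> elt \<Rightarrow> elt" where
  "sc c f = (\<lambda>x. c * f x)"

definition bv :: "key \<Rightarrow> elt" where
  "bv k0 = (\<lambda>x. if x = k0 then 1 else 0)"

definition supp :: "elt \<Rightarrow> key set" where
  "supp f = {x. f x \<noteq> 0}"

definition lin :: "(key \<Rightarrow> elt) \<Rightarrow> elt \<Rightarrow> elt" where
  "lin L f = (\<Sum>x\<in>supp f. sc (f x) (L x))"

fun bideg :: "mon \<Rightarrow> nat \<times> nat" where
  "bideg (p1, p2, q1, q2) = (p1 + p2, q1 + q2)"

definition inM :: "nat \<Rightarrow> nat \<Rightarrow> elt \<Rightarrow> bool" where
  "inM m n f \<longleftrightarrow> finite (supp f) \<and>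
     (\<forall>k I e. f (k, I, e) \<noteq> 0 \<longrightarrow> I \<subseteq> {1..4} \<and> bideg e = (m, n))"

definition cnt_gt :: "nat set \<Rightarrow> nat \<Rightarrow> nat" where
  "cnt_gt I j = card {i\<in>I. j < i}"

definition cnt_lt :: "nat set \<Rightarrow> nat \<Rightarrow> nat" where
  "cnt_lt I j = card {i\<in>I. i < j}"

fun rmul_eta_b :: "nat \<Rightarrow> key \<Rightarrow> elt" where
  "rmul_eta_b j (k, I, e) =
     (if j \<notin> I then sc ((-1) ^ cnt_gt I j) (bv (k, insert j I, e))
      else sc ((-1) ^ cnt_gt I j * (-1/2)) (bv (Suc k, I - {j}, e)))"

fun lmul_eta_b :: "nat \<Rightarrow> key \<Rightarrow> elt" where
  "lmul_eta_b j (k, I, e) =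
     (if j \<notin> I then sc ((-1) ^ cnt_lt I j) (bv (k, insert j I, e))
      else sc ((-1) ^ cnt_lt I j * (-1/2)) (bv (Suc k, I - {j}, e)))"

fun theta_b :: "key \<Rightarrow> elt" where
  "theta_b (k, I, e) = bv (Suc k, I, e)"

text \<open>w_ab = sum_j wc a b j * eta_j:
  w11 = eta2 + i eta1, w22 = eta2 - i eta1, w12 = -eta4 + i eta3, w21 = eta4 + i eta3.\<close>
definition wc :: "nat \<Rightarrow> nat \<Rightarrow> nat \<Rightarrow> complex" where
  "wc a b j =
    (if a = 1 \<and> b = 1 then (if j = 2 then 1 else if j = 1 then \<i> else 0)
     else if a = 2 \<and> b = 2 then (if j = 2 then 1 else if j = 1 then - \<i> else 0)
     else if a = 1 \<and> b = 2 then (if j = 4 then -1 else if j = 3 then \<i> else 0)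
     else if a = 2 \<and> b = 1 then (if j = 4 then 1 else if j = 3 then \<i> else 0)
     else 0)"

text \<open>d^2/(dx_a dy_b) of x1^p1 x2^p2 y1^q1 y2^q2 = dcoef a b e * monomial dmon a b e.\<close>
fun dcoef :: "nat \<Rightarrow> nat \<Rightarrow> mon \<Rightarrow> complex" where
  "dcoef a b (p1, p2, q1, q2) =
     of_nat (if a = 1 then p1 else p2) * of_nat (if b = 1 then q1 else q2)"

fun dmon :: "nat \<Rightarrow> nat \<Rightarrow> mon \<Rightarrow> mon" where
  "dmon a b (p1, p2, q1, q2) =
     ((if a = 1 then p1 - 1 else p1), (if a = 2 then p2 - 1 else p2),
      (if b = 1 then q1 - 1 else q1), (if b = 2 then q2 - 1 else q2))"

text \<open>nabla(u \<otimes> v) = sum_{a,b} u w_ab \<otimes> d^2 v/(dx_a dy_b).\<close>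
fun nabla_b :: "key \<Rightarrow> elt" where
  "nabla_b (k, I, e) =
     (\<Sum>a\<in>{1,2}. \<Sum>b\<in>{1,2}. \<Sum>j\<in>{1..4}.
        sc (wc a b j * dcoef a b e) (rmul_eta_b j (k, I, dmon a b e)))"

definition nabla :: "elt \<Rightarrow> elt" where
  "nabla = lin nabla_b"

section \<open>The Lie superalgebra g = K(1,4)_+ \<oplus> CC\<close>

text \<open>Basis: Tb m I = t^m xi_I (I a subset of {1..4}), and Cb = C.\<close>
datatype gb = Tb nat "nat set" | Cb

fun gvalid :: "gb \<Rightarrow> bool" where
  "gvalid (Tb m I) = (I \<subseteq> {1..4})"
| "gvalid Cb = True"

fun gdeg :: "gb \<Rightarrow> int" where
  "gdeg (Tb m I) = 2 * int m + int (card I) - 2"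
| "gdeg Cb = 0"

fun gpar :: "gb \<Rightarrow> nat" where
  "gpar (Tb m I) = card I mod 2"
| "gpar Cb = 0"

text \<open>xi_I xi_J = gmul_sign I J * xi_{I \<union> J}.\<close>
definition gmul_sign :: "nat set \<Rightarrow> nat set \<Rightarrow> int" where
  "gmul_sign I J = (if I \<inter> J = {} then (-1) ^ card {(i, j). i \<in> I \<and> j \<in> J \<and> j < i} else 0)"

text \<open>(left) derivative: d/dxi_i xi_I = dsign i I * xi_{I - {i}}.\<close>
definition dsign :: "nat \<Rightarrow> nat set \<Rightarrow> int" where
  "dsign i I = (if i \<in> I then (-1) ^ card {k\<in>I. k < i} else 0)"

text \<open>The cocycle psi on basis elements: psi(1, xi_1234) = -2,
  psi(xi_i, d_i(xi_1234)) = -1, i.e. psi(xi_i, xi_{{1..4}-{i}}) = (-1)^i,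
  extended by (super) skew-symmetry; all other values vanish.\<close>
fun psi :: "gb \<Rightarrow> gb \<Rightarrow> complex" where
  "psi (Tb m I) (Tb n J) =
     (if m = 0 \<and> n = 0 then
        (if I = {} \<and> J = {1..4} then -2
         else if I = {1..4} \<and> J = {} then 2
         else if card I = 1 \<and> I \<subseteq> {1..4} \<and> J = {1..4} - I then (-1) ^ (the_elem I)
         else if card J = 1 \<and> J \<subseteq> {1..4} \<and> I = {1..4} - J then (-1) ^ (the_elem J)
         else 0)
      else 0)"
| "psi _ _ = 0"

text \<open>br b1 b2 b = coefficient of basis element b in [b1, b2] (the K(1,4)_+ bracket plus psi(b1,b2) C).\<close>
fun br :: "gb \<Rightarrow> gb \<Rightarrow> gb \<Rightarrow> complex" where
  "br (Tb m I) (Tb n J) (Tb p K) =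
     (if 1 \<le> m + n \<and> p = m + n - 1 \<and> K = I \<union> J
      then of_int (((2 - int (card I)) * int n - int m * (2 - int (card J))) * gmul_sign I J)
      else 0)
   + (if p = m + n then
        (-1) ^ (card I) *
        (\<Sum>i\<in>{1..4}. if (I - {i}) \<union> (J - {i}) = K
                       then of_int (dsign i I * dsign i J * gmul_sign (I - {i}) (J - {i})) else 0)
      else 0)"
| "br (Tb m I) (Tb n J) Cb = psi (Tb m I) (Tb n J)"
| "br _ _ _ = 0"

definition inM00 :: "elt \<Rightarrow> bool" where
  "inM00 f = inM 0 0 f"

definition one00 :: elt where
  "one00 = bv (0, {}, (0, 0, 0, 0))"

text \<open>rho is the action of g on M_A^{0,0} = U(g) \<otimes>_{U(g_{\<ge>0})} V_A^{0,0}, given on basis elements of g: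
  a super-representation (preserving M_A^{0,0}, linear), in which g_{<0} acts by left multiplication in
  U(g_{<0}), and g_{\<ge>0} annihilates 1 \<otimes> 1 (V_A^{0,0} is the trivial g_0-module: t, C and g_0^{ss}
  act by 0 on constants, and g_{>0} acts trivially).  These conditions characterize the induced module.\<close>
definition induced_action_00 :: "(gb \<Rightarrow> elt \<Rightarrow> elt) \<Rightarrow> bool" where
  "induced_action_00 \<rho> \<longleftrightarrow>
     (\<forall>b f. gvalid b \<longrightarrow> inM00 f \<longrightarrow> inM00 (\<rho> b f)) \<and>
     (\<forall>b f g c. gvalid b \<longrightarrow> inM00 f \<longrightarrow> inM00 g \<longrightarrow>
        \<rho> b (f + g) = \<rho> b f + \<rho> b g \<and> \<rho> b (sc c f) = sc c (\<rho> b f)) \<and>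
     (\<forall>b1 b2 f. gvalid b1 \<longrightarrow> gvalid b2 \<longrightarrow> inM00 f \<longrightarrow>
        \<rho> b1 (\<rho> b2 f) - sc ((-1) ^ (gpar b1 * gpar b2)) (\<rho> b2 (\<rho> b1 f))
          = (\<Sum>b\<in>{b. br b1 b2 b \<noteq> 0}. sc (br b1 b2 b) (\<rho> b f))) \<and>
     (\<forall>f. inM00 f \<longrightarrow> \<rho> (Tb 0 {}) f = lin theta_b f) \<and>
     (\<forall>j f. j \<in> {1..4} \<longrightarrow> inM00 f \<longrightarrow> \<rho> (Tb 0 {j}) f = lin (lmul_eta_b j) f) \<and>
     (\<forall>b. gvalid b \<longrightarrow> 0 \<le> gdeg b \<longrightarrow> \<rho> b one00 = 0)"

end

theory Submission
  imports Defs
begin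

text \<open>Right multiplication commutes with left multiplication, so \<open>\<nabla>\<close> is a map of free
  left \<open>U(g\<^bsub><0\<^esub>)\<close>-modules, sending \<open>1 \<otimes> x\<^sub>a y\<^sub>b\<close> to \<open>w\<^sub>a\<^sub>b\<close> on \<open>M\<^sub>A\<^sup>1\<^sup>,\<^sup>1\<close>.
  The coefficient matrix of the \<open>w\<^sub>a\<^sub>b\<close> in the \<open>\<eta>\<^sub>j\<close> is \<open>\<surd>2\<close> times a unitary matrix, so every
  \<open>\<eta>\<^sub>j\<close> is \<open>\<nabla>\<close> of an explicit element of bidegree \<open>(1,1)\<close>. Since \<open>\<Theta> = -2\<eta>\<^sub>1\<^sup>2\<close>, the image
  of \<open>\<nabla>\<close> is the left ideal generated by the \<open>\<eta>\<^sub>j\<close>: the augmentation ideal of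
  \<open>U(g\<^bsub><0\<^esub>) = M\<^sub>A\<^sup>0\<^sup>,\<^sup>0\<close>, of codimension one.

  The augmentation ideal is a \<open>g\<close>-submodule: elements of negative degree act by left
  multiplication, elements of degree \<open>\<ge> 0\<close> kill \<open>1 \<otimes> 1\<close>, and every basis vector
  \<open>\<Theta>\<^sup>k \<eta>\<^sub>I \<otimes> 1\<close> arises from \<open>1 \<otimes> 1\<close> by left multiplications, so induction along
  the supercommutator relations shows that the coefficient of \<open>1 \<otimes> 1\<close> in \<open>\<rho> b m\<close> vanishes.

  Exactness at \<open>M\<^sub>A\<^sup>1\<^sup>,\<^sup>1\<close> follows from \<open>\<nabla>\<^sup>2 = 0\<close> and a homotopy \<open>H\<close> with
  \<open>\<nabla> H + s \<nabla> = id\<close> on \<open>M\<^sub>A\<^sup>1\<^sup>,\<^sup>1\<close>, where \<open>s\<close> is the section of \<open>\<nabla>\<close> above. Both sides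
  commute with multiplication by \<open>\<Theta>\<close>, so both identities only need checking on the finitely
  many basis vectors \<open>\<eta>\<^sub>I \<otimes> e\<close>, which is done by exact evaluation.\<close>

text \<open>Kept out of the simplifier: it would eta-expand sums of elements into lambda terms.\<close>
declare plus_fun_apply [simp del] zero_fun_apply [simp del] minus_apply [simp del] uminus_apply [simp del]

lemmas fun_apply_simps = plus_fun_apply zero_fun_apply minus_apply uminus_apply

lemma sum_fun_apply: "(\<Sum>a\<in>A. f a) x = (\<Sum>a\<in>A. f a x)"
  by (induction A rule: infinite_finite_induct) (auto simp: fun_apply_simps)

lemma sc_apply: "sc c f x = c * f x"
  by (simp add: sc_def)

lemma bv_apply: "bv k0 x = (if x = k0 then 1 else 0)"
  by (simp add: bv_def)

lemma sc_0_left [simp]: "sc 0 f = 0"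
  and sc_0_right [simp]: "sc c 0 = 0"
  and sc_1 [simp]: "sc 1 f = f"
  and sc_sc [simp]: "sc a (sc b f) = sc (a * b) f"
  and sc_minus_one: "sc (-1) f = - f"
  by (simp_all add: sc_def fun_eq_iff fun_apply_simps)

lemma sc_add_right: "sc c (f + g) = sc c f + sc c g"
  and sc_add_left: "sc (a + b) f = sc a f + sc b f"
  and sc_diff_right: "sc c (f - g) = sc c f - sc c g"
  by (simp_all add: sc_def fun_eq_iff fun_apply_simps algebra_simps)

lemma sc_sum_right: "sc c (\<Sum>a\<in>A. f a) = (\<Sum>a\<in>A. sc c (f a))"
  by (induction A rule: infinite_finite_induct) (simp_all add: sc_add_right)

lemma sc_sum_left: "sc (\<Sum>a\<in>A. c a) f = (\<Sum>a\<in>A. sc (c a) f)"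
  by (induction A rule: infinite_finite_induct) (simp_all add: sc_add_left)

lemma sum_sc_regroup:
  "(\<Sum>a\<in>A. sc (c a) (\<Sum>l\<in>L. sc (w a l) (R l))) = (\<Sum>l\<in>L. sc (\<Sum>a\<in>A. c a * w a l) (R l))"
  by (simp add: sc_sum_right sc_sum_left sum.swap[of _ A])

lemma supp_add_subset: "supp (f + g) \<subseteq> supp f \<union> supp g"
  and supp_sc_subset: "supp (sc c f) \<subseteq> supp f"
  by (auto simp: supp_def sc_apply fun_apply_simps)

lemma supp_bv [simp]: "supp (bv x) = {x}"
  and supp_zero [simp]: "supp 0 = {}"
  by (auto simp: supp_def bv_def fun_apply_simps)

lemma finite_supp_add: "finite (supp f) \<Longrightarrow> finite (supp g) \<Longrightarrow> finite (supp (f + g))"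
  by (meson finite_UnI finite_subset supp_add_subset)

lemma finite_supp_sc: "finite (supp f) \<Longrightarrow> finite (supp (sc c f))"
  by (meson finite_subset supp_sc_subset)

lemma finite_supp_sum:
  "(\<And>a. a \<in> A \<Longrightarrow> finite (supp (h a))) \<Longrightarrow> finite (supp (\<Sum>a\<in>A. h a))"
  by (induction A rule: infinite_finite_induct) (auto intro: finite_supp_add)

lemma lin_eq_sum:
  assumes "finite S" "supp f \<subseteq> S"
  shows "lin L f = (\<Sum>x\<in>S. sc (f x) (L x))"
  unfolding lin_def
  by (rule sum.mono_neutral_left) (use assms in \<open>auto simp: supp_def\<close>)

lemma lin_add:
  assumes "finite (supp f)" "finite (supp g)"
  shows "lin L (f + g) = lin L f + lin L g"
proof -
  let ?S = "supp f \<union> supp g"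
  have "finite ?S" using assms by simp
  then show ?thesis
    using lin_eq_sum[of ?S "f + g" L] lin_eq_sum[of ?S f L] lin_eq_sum[of ?S g L] supp_add_subset
    by (simp add: plus_fun_apply sc_add_left sum.distrib)
qed

lemma lin_sc: "lin L (sc c f) = sc c (lin L f)"
proof (cases "c = 0")
  case False
  then have "supp (sc c f) = supp f" by (auto simp: supp_def sc_apply)
  then show ?thesis by (simp add: lin_def sc_sum_right sc_apply mult.commute)
qed (simp add: lin_def)

lemma lin_bv [simp]: "lin L (bv x) = L x"
  by (simp add: lin_def bv_apply)

lemma lin_zero [simp]: "lin L 0 = 0"
  by (simp add: lin_def)

lemma lin_sum:
  "(\<And>a. a \<in> A \<Longrightarrow> finite (supp (h a))) \<Longrightarrow> lin L (\<Sum>a\<in>A. h a) = (\<Sum>a\<in>A. lin L (h a))"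
  by (induction A rule: infinite_finite_induct) (simp_all add: lin_add finite_supp_sum)

lemma lin_cong: "(\<And>x. x \<in> supp f \<Longrightarrow> L x = L' x) \<Longrightarrow> lin L f = lin L' f"
  by (simp add: lin_def)

lemma lin_apply: "lin L f y = (\<Sum>x\<in>supp f. f x * L x y)"
  by (simp add: lin_def sum_fun_apply sc_apply)

lemma lin_bv_self:
  assumes "finite (supp f)"
  shows "lin bv f = f"
proof
  fix y
  have "lin bv f y = (\<Sum>x\<in>supp f. if x = y then f x else 0)"
    by (auto simp: lin_apply bv_apply intro: sum.cong)
  also have "\<dots> = f y" using assms by (auto simp: supp_def)
  finally show "lin bv f y = f y" .
qed

lemma lin_lin:
  assumes "finite (supp f)" "\<And>x. x \<in> supp f \<Longrightarrow> finite (supp (M x))"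
  shows "lin L (lin M f) = lin (\<lambda>x. lin L (M x)) f"
  using assms by (simp add: lin_def[of M] lin_def[of "\<lambda>x. lin L (M x)"] lin_sum finite_supp_sc lin_sc)

lemma lin_diff_fun: "lin (\<lambda>x. A x - B x) f = lin A f - lin B f"
  by (simp add: lin_def sc_diff_right sum_subtractf)

section \<open>Bidegrees and the operator \<open>\<nabla>\<close>\<close>

lemma inM_finite_supp: "inM m n f \<Longrightarrow> finite (supp f)"
  by (simp add: inM_def)

lemma inM_supp_D: "inM m n f \<Longrightarrow> (k, I, e) \<in> supp f \<Longrightarrow> I \<subseteq> {1..4} \<and> bideg e = (m, n)"
  unfolding inM_def supp_def by blast

lemma inM_zero [simp]: "inM m n 0"
  by (simp add: inM_def zero_fun_apply)

lemma inM_add: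
  assumes "inM m n f" "inM m n g"
  shows "inM m n (f + g)"
proof -
  have "f x \<noteq> 0 \<or> g x \<noteq> 0" if "(f + g) x \<noteq> 0" for x
    using that by (auto simp: plus_fun_apply)
  then show ?thesis
    using assms finite_supp_add[of f g] unfolding inM_def by metis
qed

lemma inM_sc:
  assumes "inM m n f"
  shows "inM m n (sc c f)"
proof -
  have "f x \<noteq> 0" if "sc c f x \<noteq> 0" for x
    using that by (auto simp: sc_apply)
  then show ?thesis
    using assms finite_supp_sc[of f c] unfolding inM_def by metis
qed

lemma inM_diff: "inM m n f \<Longrightarrow> inM m n g \<Longrightarrow> inM m n (f - g)"
  using inM_add[of m n f "sc (-1) g"] inM_sc[of m n g "-1"] by (simp add: sc_minus_one)

lemma inM_sum: "(\<And>a. a \<in> A \<Longrightarrow> inM m n (h a)) \<Longrightarrow> inM m n (\<Sum>a\<in>A. h a)"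
  by (induction A rule: infinite_finite_induct) (auto intro: inM_add)

lemma inM_bv: "I \<subseteq> {1..4} \<Longrightarrow> bideg e = (m, n) \<Longrightarrow> inM m n (bv (k, I, e))"
  unfolding inM_def by (simp add: bv_apply del: bideg.simps)

lemma inM_lin:
  "finite (supp f) \<Longrightarrow> (\<And>x. x \<in> supp f \<Longrightarrow> inM m n (L x)) \<Longrightarrow> inM m n (lin L f)"
  unfolding lin_def by (intro inM_sum inM_sc) auto

lemma dmon_bideg:
  assumes "a \<in> {1, 2}" "b \<in> {1, 2}" "dcoef a b e \<noteq> 0" "bideg e = (m, n)"
  shows "bideg (dmon a b e) = (m - 1, n - 1)"
  using assms by (cases e) (auto split: if_splits)

lemma nabla_b_inM:
  assumes "I \<subseteq> {1..4}" "bideg e = (m, n)"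
  shows "inM (m - 1) (n - 1) (nabla_b (k, I, e))"
proof -
  have "inM (m - 1) (n - 1) (sc (wc a b j * dcoef a b e) (rmul_eta_b j (k, I, dmon a b e)))"
    if "a \<in> {1, 2}" "b \<in> {1, 2}" "j \<in> {1..4}" for a b j
  proof (cases "dcoef a b e = 0")
    case False
    then show ?thesis using that assms dmon_bideg[OF that(1,2) False]
      by (auto intro!: inM_sc inM_bv)
  qed simp
  then show ?thesis by (simp only: nabla_b.simps) (intro inM_sum)
qed

lemma nabla_inM:
  assumes "inM m n f"
  shows "inM (m - 1) (n - 1) (nabla f)"
  unfolding nabla_def
proof (rule inM_lin)
  show "finite (supp f)" using assms by (rule inM_finite_supp)
  fix x assume "x \<in> supp f"
  then show "inM (m - 1) (n - 1) (nabla_b x)"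
    using assms by (cases x) (simp only: nabla_b_inM inM_supp_D)
qed

lemma finite_supp_rmul_eta_b: "finite (supp (rmul_eta_b j x))"
  by (cases x) (simp add: finite_supp_sc)

lemma finite_supp_nabla_b: "finite (supp (nabla_b x))"
  by (cases x) (simp only: nabla_b.simps; intro finite_supp_sum finite_supp_sc finite_supp_rmul_eta_b)

lemma nabla_sc: "nabla (sc c f) = sc c (nabla f)"
  by (simp add: nabla_def lin_sc)

lemma nabla_b_unit_coeff: "nabla_b x (0, {}, e) = 0"
proof -
  have "rmul_eta_b j x (0, {}, e) = 0" for j x
    by (cases x) (auto simp: sc_apply bv_apply)
  then show ?thesis
    by (cases x) (simp only: nabla_b.simps sum_fun_apply sc_apply mult_zero_right sum.neutral_const)
qed

lemma nabla_unit_coeff: "nabla f (0, {}, e) = 0"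
  by (simp add: nabla_def lin_apply nabla_b_unit_coeff)

section \<open>Multiplication by powers of \<open>\<Theta>\<close>\<close>

fun shift_key :: "nat \<Rightarrow> key \<Rightarrow> key" where
  "shift_key n (k, I, e) = (k + n, I, e)"

definition theta_shift :: "nat \<Rightarrow> elt \<Rightarrow> elt" where
  "theta_shift n f = (\<lambda>(k, I, e). if n \<le> k then f (k - n, I, e) else 0)"

lemma theta_shift_apply: "theta_shift n f (k, I, e) = (if n \<le> k then f (k - n, I, e) else 0)"
  by (simp add: theta_shift_def)

lemma theta_shift_shift_key [simp]: "theta_shift n f (shift_key n x) = f x"
  by (cases x) (simp add: theta_shift_apply)

lemma theta_shift_add: "theta_shift n (f + g) = theta_shift n f + theta_shift n g"
  and theta_shift_diff: "theta_shift n (f - g) = theta_shift n f - theta_shift n g"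
  and theta_shift_sc: "theta_shift n (sc c f) = sc c (theta_shift n f)"
  and theta_shift_zero [simp]: "theta_shift n 0 = 0"
  by (auto simp: fun_eq_iff theta_shift_def sc_apply fun_apply_simps)

lemma theta_shift_sum: "theta_shift n (\<Sum>a\<in>A. h a) = (\<Sum>a\<in>A. theta_shift n (h a))"
  by (induction A rule: infinite_finite_induct) (simp_all add: theta_shift_add)

lemma theta_shift_bv: "theta_shift n (bv (k, I, e)) = bv (k + n, I, e)"
  by (auto simp: fun_eq_iff theta_shift_def bv_def)

lemma supp_theta_shift: "supp (theta_shift n f) = shift_key n ` supp f"
proof (rule set_eqI)
  fix y :: key
  obtain k I e where y: "y = (k, I, e)" by (cases y)
  show "y \<in> supp (theta_shift n f) \<longleftrightarrow> y \<in> shift_key n ` supp f"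
  proof
    assume "y \<in> supp (theta_shift n f)"
    then have "n \<le> k" "f (k - n, I, e) \<noteq> 0" by (auto simp: supp_def y theta_shift_apply split: if_splits)
    then show "y \<in> shift_key n ` supp f"
      unfolding y supp_def by (intro image_eqI[of _ _ "(k - n, I, e)"]) auto
  qed (auto simp: supp_def theta_shift_apply)
qed

lemma inM_theta_shift:
  assumes "inM m n f"
  shows "inM m n (theta_shift k f)"
proof -
  have "f (k' - k, I, e) \<noteq> 0" if "theta_shift k f (k', I, e) \<noteq> 0" for k' I e
    using that by (auto simp: theta_shift_apply split: if_splits)
  then show ?thesis
    using assms unfolding inM_def supp_theta_shift by blast
qed

lemma lin_theta_shift: "lin L (theta_shift n f) = lin (\<lambda>x. L (shift_key n x)) f"
proof -
  have "inj (shift_key n)"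
  proof (rule injI)
    show "shift_key n x = shift_key n y \<Longrightarrow> x = y" for x y by (cases x; cases y) auto
  qed
  then show ?thesis
    unfolding lin_def supp_theta_shift by (simp add: sum.reindex inj_on_subset[of _ UNIV])
qed

lemma lin_theta_shift_fun: "lin (\<lambda>x. theta_shift n (L x)) f = theta_shift n (lin L f)"
  by (simp add: lin_def theta_shift_sum theta_shift_sc)

lemma nabla_b_theta_shift: "nabla_b (shift_key n x) = theta_shift n (nabla_b x)"
proof -
  have "rmul_eta_b j (k + n, I, e) = theta_shift n (rmul_eta_b j (k, I, e))" for j k I e
    by (simp add: theta_shift_sc theta_shift_bv)
  then show ?thesis
    by (cases x) (simp only: shift_key.simps nabla_b.simps theta_shift_sum theta_shift_sc)
qed

lemma nabla_theta_shift: "nabla (theta_shift n f) = theta_shift n (nabla f)"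
  unfolding nabla_def lin_theta_shift nabla_b_theta_shift lin_theta_shift_fun ..

section \<open>The image of \<open>\<nabla>\<close> on \<open>M\<^sub>A\<^sup>1\<^sup>,\<^sup>1\<close>\<close>

definition mon_xy :: "nat \<Rightarrow> nat \<Rightarrow> mon" where
  "mon_xy a b =
     (if a = 1 then 1 else 0, if a = 2 then 1 else 0, if b = 1 then 1 else 0, if b = 2 then 1 else 0)"

lemma nabla_b_mon_xy:
  assumes "a \<in> {1, 2}" "b \<in> {1, 2}"
  shows "nabla_b (k, J, mon_xy a b) = (\<Sum>j\<in>{1..4}. sc (wc a b j) (rmul_eta_b j (k, J, (0, 0, 0, 0))))"
  using assms by (auto simp: mon_xy_def simp del: rmul_eta_b.simps)

lemma wc_orthogonal:
  assumes "j \<in> {1..4}" "l \<in> {1..4}"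
  shows "(\<Sum>(a, b)\<in>{1, 2} \<times> {1, 2}. cnj (wc a b j) * wc a b l) = (if j = l then 2 else 0)"
proof -
  have pairs: "{1, 2} \<times> {1, 2} = {(1, 1), (1, 2), (2, 1), (2, 2::nat)}" by auto
  have "j \<in> {1, 2, 3, 4}" "l \<in> {1, 2, 3, 4}" using assms by auto
  then show ?thesis unfolding pairs by (auto simp: wc_def)
qed

text \<open>\<open>\<Theta>\<^sup>k \<eta>\<^sub>J \<otimes> v\<^sub>j\<close>, where \<open>v\<^sub>j = \<Sum> cnj (wc a b j) / 2 \<cdot> x\<^sub>a y\<^sub>b\<close> is the preimage
  of \<open>\<eta>\<^sub>j\<close> under \<open>x\<^sub>a y\<^sub>b \<mapsto> w\<^sub>a\<^sub>b\<close>.\<close>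
definition eta_lift :: "nat \<Rightarrow> nat \<Rightarrow> nat set \<Rightarrow> elt" where
  "eta_lift j k J = (\<Sum>(a, b)\<in>{1, 2} \<times> {1, 2}. sc (cnj (wc a b j) / 2) (bv (k, J, mon_xy a b)))"

lemma finite_supp_eta_lift: "finite (supp (eta_lift j k J))"
  unfolding eta_lift_def by (intro finite_supp_sum) (auto intro: finite_supp_sc)

lemma inM_eta_lift: "J \<subseteq> {1..4} \<Longrightarrow> inM 1 1 (eta_lift j k J)"
  unfolding eta_lift_def by (intro inM_sum) (auto intro!: inM_sc inM_bv simp: mon_xy_def)

lemma nabla_eta_lift:
  assumes "j \<in> {1..4}"
  shows "nabla (eta_lift j k J) = rmul_eta_b j (k, J, (0, 0, 0, 0))"
proof -
  let ?R = "\<lambda>l. rmul_eta_b l (k, J, (0, 0, 0, 0))"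
  let ?c = "\<lambda>(a, b). cnj (wc a b j) / 2" and ?w = "\<lambda>(a, b) l. wc a b l"
  have "nabla (eta_lift j k J) = (\<Sum>ab\<in>{1, 2} \<times> {1, 2}. sc (?c ab) (\<Sum>l\<in>{1..4}. sc (?w ab l) (?R l)))"
    unfolding eta_lift_def nabla_def
    by (subst lin_sum) (auto simp: finite_supp_sc lin_sc nabla_b_mon_xy simp del: nabla_b.simps intro!: sum.cong)
  also have "\<dots> = (\<Sum>l\<in>{1..4}. sc (\<Sum>ab\<in>{1, 2} \<times> {1, 2}. ?c ab * ?w ab l) (?R l))"
    by (rule sum_sc_regroup)
  also have "\<dots> = (\<Sum>l\<in>{1..4}. sc (if l = j then 1 else 0) (?R l))"
  proof (rule sum.cong)
    fix l :: nat assume "l \<in> {1..4}"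
    then have "(\<Sum>ab\<in>{1, 2} \<times> {1, 2}. ?c ab * ?w ab l) = (if l = j then 1 else 0)"
      using wc_orthogonal[OF assms] by (auto simp: sum_divide_distrib[symmetric] case_prod_beta)
    then show "sc (\<Sum>ab\<in>{1, 2} \<times> {1, 2}. ?c ab * ?w ab l) (?R l) = sc (if l = j then 1 else 0) (?R l)"
      by (simp only:)
  qed simp
  also have "\<dots> = ?R j"
    using assms by (simp add: if_distrib[of "\<lambda>c. sc c _"] del: rmul_eta_b.simps cong: if_cong)
  finally show ?thesis .
qed

lemma rmul_eta_b_Max:
  assumes "finite I" "I \<noteq> {}"
  shows "rmul_eta_b (Max I) (k, I - {Max I}, e) = bv (k, I, e)"
proof -
  have "{i \<in> I - {Max I}. Max I < i} = {}"
    using Max_ge[OF assms(1)] by (auto simp: not_less[symmetric])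
  then have "cnt_gt (I - {Max I}) (Max I) = 0"
    unfolding cnt_gt_def by (simp only: card.empty)
  moreover have "insert (Max I) (I - {Max I}) = I"
    using Max_in[OF assms] by auto
  ultimately show ?thesis by simp
qed

lemma rmul_eta_b_square: "rmul_eta_b j (k, {j}, e) = sc (-1/2) (bv (Suc k, {}, e))"
proof -
  have "cnt_gt {j} j = 0" by (simp add: cnt_gt_def)
  then show ?thesis by simp
qed

text \<open>A basis vector \<open>\<Theta>\<^sup>k \<eta>\<^sub>I\<close> of the augmentation ideal factors as
  \<open>(\<Theta>\<^sup>k \<eta>\<^bsub>I-{j}\<^esub>) \<eta>\<^sub>j\<close> with \<open>j = max I\<close>, or as
  \<open>-2 (\<Theta>\<^bsup>k-1\<^esup> \<eta>\<^sub>1) \<eta>\<^sub>1\<close> if \<open>I = {}\<close>.\<close>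
fun nabla_section :: "key \<Rightarrow> elt" where
  "nabla_section (k, I, e) =
     (if I \<noteq> {} then eta_lift (Max I) k (I - {Max I})
      else if k = 0 then 0 else sc (-2) (eta_lift 1 (k - 1) {1}))"

lemma finite_supp_nabla_section: "finite (supp (nabla_section x))"
  by (cases x) (simp add: finite_supp_eta_lift finite_supp_sc)

lemma inM_nabla_section:
  assumes "I \<subseteq> {1..4}"
  shows "inM 1 1 (nabla_section (k, I, e))"
proof -
  have "inM 1 1 (eta_lift (Max I) k (I - {Max I}))"
    by (rule inM_eta_lift) (use assms in auto)
  moreover have "inM 1 1 (eta_lift 1 (k - 1) {1})"
    by (rule inM_eta_lift) simp
  ultimately show ?thesis by (simp add: inM_sc)
qed

lemma nabla_nabla_section:
  assumes "I \<subseteq> {1..4}" "(k, I) \<noteq> (0, {})"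
  shows "nabla (nabla_section (k, I, e)) = bv (k, I, (0, 0, 0, 0))"
proof (cases "I = {}")
  case True
  then obtain k' where "k = Suc k'" using assms(2) not0_implies_Suc by blast
  then show ?thesis
    using True by (simp add: nabla_sc nabla_eta_lift rmul_eta_b_square del: rmul_eta_b.simps)
next
  case False
  have "finite I" using assms(1) finite_subset by blast
  then have "Max I \<in> {1..4}" using False assms(1) Max_in by (metis subsetD)
  then show ?thesis
    using False \<open>finite I\<close> by (simp add: nabla_eta_lift rmul_eta_b_Max del: rmul_eta_b.simps)
qed

lemma nabla_section_theta_shift:
  assumes "(k, I) \<noteq> (0, {})"
  shows "nabla_section (k + n, I, e) = theta_shift n (nabla_section (k, I, e))"
proof -
  have "theta_shift n (eta_lift j k J) = eta_lift j (k + n) J" for j k J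
    unfolding eta_lift_def theta_shift_sum by (rule sum.cong) (auto simp: theta_shift_sc theta_shift_bv)
  then show ?thesis
    using assms by (auto simp: theta_shift_sc)
qed

abbreviation unit_key :: key where
  "unit_key \<equiv> (0, {}, (0, 0, 0, 0))"

definition augmentation_ideal :: "elt set" where
  "augmentation_ideal = {g. inM 0 0 g \<and> g unit_key = 0}"

lemma image_nabla_M11: "nabla ` {f. inM 1 1 f} = augmentation_ideal"
proof (intro set_eqI iffI)
  fix g assume "g \<in> nabla ` {f. inM 1 1 f}"
  then show "g \<in> augmentation_ideal"
    using nabla_inM[of 1 1] nabla_unit_coeff by (auto simp: augmentation_ideal_def)
next
  fix g assume "g \<in> augmentation_ideal"
  then have g: "inM 0 0 g" "g unit_key = 0"
    by (auto simp: augmentation_ideal_def)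
  have fin: "finite (supp g)" using g(1) by (rule inM_finite_supp)
  have lifts: "nabla (nabla_section x) = bv x" if "x \<in> supp g" for x
  proof -
    obtain k I e where fields: "x = (k, I, e)" by (cases x)
    have I: "I \<subseteq> {1..4}" and "bideg e = (0, 0)" using inM_supp_D[OF g(1)] that fields by auto
    then have e: "e = (0, 0, 0, 0)" by (cases e) auto
    then have "(k, I) \<noteq> (0, {})" using that fields g(2) by (auto simp: supp_def)
    then show ?thesis using fields e nabla_nabla_section[OF I] by simp
  qed
  have "nabla (lin nabla_section g) = lin (\<lambda>x. nabla (nabla_section x)) g"
    unfolding nabla_def by (rule lin_lin[OF fin finite_supp_nabla_section])
  also have "\<dots> = lin bv g" by (rule lin_cong) (rule lifts)
  also have "\<dots> = g" by (rule lin_bv_self[OF fin])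
  finally have "nabla (lin nabla_section g) = g" .
  moreover have "inM 1 1 (lin nabla_section g)"
  proof (rule inM_lin[OF fin])
    fix x assume "x \<in> supp g"
    then show "inM 1 1 (nabla_section x)"
      using inM_supp_D[OF g(1)] inM_nabla_section by (cases x) auto
  qed
  ultimately show "g \<in> nabla ` {f. inM 1 1 f}" by (metis image_eqI mem_Collect_eq)
qed

section \<open>The action of \<open>g\<close> preserves the augmentation ideal\<close>

lemma gvalid_negative_degree:
  assumes "gvalid b" "gdeg b < 0"
  shows "b = Tb 0 {} \<or> (\<exists>j\<in>{1..4}. b = Tb 0 {j})"
proof (cases b)
  case (Tb m I)
  have I: "I \<subseteq> {1..4}" using assms(1) Tb by simp
  then have "finite I" using finite_subset by blast
  have "2 * int m + int (card I) < 2" using assms(2) Tb by simp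
  then have "m = 0" and "card I = 0 \<or> card I = 1" by auto
  then show ?thesis
  proof (elim conjE disjE)
    assume "card I = 1"
    then obtain j where "I = {j}" by (rule card_1_singletonE)
    then show ?thesis using Tb I \<open>m = 0\<close> by auto
  qed (use Tb \<open>finite I\<close> in simp)
next
  case Cb
  then show ?thesis using assms by simp
qed

lemma gvalid_bracket_support:
  assumes "gvalid b1" "gvalid b2" "br b1 b2 b \<noteq> 0"
  shows "gvalid b"
proof (cases b)
  case (Tb p K)
  show ?thesis
  proof (rule ccontr)
    assume "\<not> gvalid b"
    with Tb have K: "\<not> K \<subseteq> {1..4}" by simp
    have "br b1 b2 b = 0"
    proof (cases b1; cases b2)
      fix m I n J assume b12: "b1 = Tb m I" "b2 = Tb n J"
      then have "I \<subseteq> {1..4}" "J \<subseteq> {1..4}" using assms(1,2) by auto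
      then have "K \<noteq> I \<union> J" "\<And>i. (I - {i}) \<union> (J - {i}) \<noteq> K" using K by auto
      then show ?thesis using b12 Tb by simp
    qed (use Tb in simp_all)
    with assms(3) show False by simp
  qed
qed simp

lemma lin_unit_coeff: "(\<And>x. L x unit_key = 0) \<Longrightarrow> lin L f unit_key = 0"
  by (simp add: lin_apply)

lemma theta_b_unit_coeff: "theta_b x unit_key = 0"
  by (cases x) (simp add: bv_apply)

lemma lmul_eta_b_unit_coeff: "lmul_eta_b j x unit_key = 0"
  by (cases x) (auto simp: sc_apply bv_apply)

lemma inM_bv_unit: "I \<subseteq> {1..4} \<Longrightarrow> inM 0 0 (bv (k, I, (0, 0, 0, 0)))"
  by (rule inM_bv) simp_all

context
  fixes \<rho> :: "gb \<Rightarrow> elt \<Rightarrow> elt"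
  assumes \<rho>: "induced_action_00 \<rho>"
begin

lemma rho_inM: "gvalid b \<Longrightarrow> inM 0 0 f \<Longrightarrow> inM 0 0 (\<rho> b f)"
  and rho_add: "gvalid b \<Longrightarrow> inM 0 0 f \<Longrightarrow> inM 0 0 g \<Longrightarrow> \<rho> b (f + g) = \<rho> b f + \<rho> b g"
  and rho_sc: "gvalid b \<Longrightarrow> inM 0 0 f \<Longrightarrow> \<rho> b (sc c f) = sc c (\<rho> b f)"
  and rho_supercommutator: "gvalid b1 \<Longrightarrow> gvalid b2 \<Longrightarrow> inM 0 0 f \<Longrightarrow>
    \<rho> b1 (\<rho> b2 f) - sc ((-1) ^ (gpar b1 * gpar b2)) (\<rho> b2 (\<rho> b1 f))
      = (\<Sum>b\<in>{b. br b1 b2 b \<noteq> 0}. sc (br b1 b2 b) (\<rho> b f))"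
  and rho_theta: "inM 0 0 f \<Longrightarrow> \<rho> (Tb 0 {}) f = lin theta_b f"
  and rho_eta: "j \<in> {1..4} \<Longrightarrow> inM 0 0 f \<Longrightarrow> \<rho> (Tb 0 {j}) f = lin (lmul_eta_b j) f"
  and rho_one00: "gvalid b \<Longrightarrow> 0 \<le> gdeg b \<Longrightarrow> \<rho> b one00 = 0"
  using \<rho> unfolding induced_action_00_def inM00_def by blast+

lemma rho_negative_unit_coeff:
  "gvalid b \<Longrightarrow> gdeg b < 0 \<Longrightarrow> inM 0 0 f \<Longrightarrow> \<rho> b f unit_key = 0"
  using gvalid_negative_degree[of b] rho_theta rho_eta lin_unit_coeff theta_b_unit_coeff
    lmul_eta_b_unit_coeff
  by metis

lemma rho_theta_bv: "I \<subseteq> {1..4} \<Longrightarrow> \<rho> (Tb 0 {}) (bv (k, I, (0, 0, 0, 0))) = bv (Suc k, I, (0, 0, 0, 0))"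
  using rho_theta[OF inM_bv_unit] by simp

lemma rho_eta_Min_bv:
  assumes "I \<subseteq> {1..4}" "I \<noteq> {}"
  shows "\<rho> (Tb 0 {Min I}) (bv (k, I - {Min I}, (0, 0, 0, 0))) = bv (k, I, (0, 0, 0, 0))"
proof -
  have "finite I" using assms(1) finite_subset by blast
  then have "Min I \<in> I" using assms(2) by simp
  have "{i \<in> I - {Min I}. i < Min I} = {}"
    using Min_le[OF \<open>finite I\<close>] by (auto simp: not_less[symmetric])
  then have "cnt_lt (I - {Min I}) (Min I) = 0" unfolding cnt_lt_def by (simp only: card.empty)
  moreover have "insert (Min I) (I - {Min I}) = I" using \<open>Min I \<in> I\<close> by auto
  moreover have "inM 0 0 (bv (k, I - {Min I}, (0, 0, 0, 0)))" using assms(1) by (intro inM_bv_unit) auto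
  ultimately show ?thesis using rho_eta \<open>Min I \<in> I\<close> assms(1) by auto
qed

text \<open>The supercommutator moves the left multiplication \<open>\<rho> b\<^sub>2\<close> to the outside, where it
  cannot produce \<open>1 \<otimes> 1\<close>; the bracket terms are handled by the hypothesis on \<open>f\<close>.\<close>
lemma rho_unit_coeff_step:
  assumes b: "gvalid b" and b2: "gvalid b2" "gdeg b2 < 0" and f: "inM 0 0 f"
    and f_aug: "\<And>b'. gvalid b' \<Longrightarrow> \<rho> b' f unit_key = 0"
  shows "\<rho> b (\<rho> b2 f) unit_key = 0"
proof -
  let ?S = "{b'. br b b2 b' \<noteq> 0}"
  have "\<rho> b (\<rho> b2 f) = sc ((-1) ^ (gpar b * gpar b2)) (\<rho> b2 (\<rho> b f))
      + (\<Sum>b'\<in>?S. sc (br b b2 b') (\<rho> b' f))"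
    using rho_supercommutator[OF b b2(1) f] by (simp add: algebra_simps)
  moreover have "(\<Sum>b'\<in>?S. sc (br b b2 b') (\<rho> b' f)) unit_key = 0"
    using f_aug gvalid_bracket_support[OF b b2(1)] by (simp add: sum_fun_apply sc_apply)
  ultimately show ?thesis
    using rho_negative_unit_coeff[OF b2 rho_inM[OF b f]] by (simp add: plus_fun_apply sc_apply)
qed

lemma rho_basis_unit_coeff:
  assumes "I \<subseteq> {1..4}" "gvalid b"
  shows "\<rho> b (bv (k, I, (0, 0, 0, 0))) unit_key = 0"
  using assms
proof (induction "k + card I" arbitrary: k I b rule: less_induct)
  case less
  have I: "I \<subseteq> {1..4}" and b: "gvalid b" by fact+
  consider "gdeg b < 0" | "0 \<le> gdeg b" "k = 0" "I = {}" | k' where "k = Suc k'" | "I \<noteq> {}"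
    by (cases k) force+
  then show ?case
  proof cases
    case 1
    then show ?thesis using rho_negative_unit_coeff[OF b] inM_bv_unit[OF I] by blast
  next
    case 2
    then show ?thesis using rho_one00[OF b] by (simp add: one00_def zero_fun_apply)
  next
    case (3 k')
    have "\<rho> b (\<rho> (Tb 0 {}) (bv (k', I, (0, 0, 0, 0)))) unit_key = 0"
      using 3 I by (intro rho_unit_coeff_step[OF b] inM_bv_unit less.hyps) auto
    then show ?thesis using rho_theta_bv[OF I] 3 by simp
  next
    case 4
    have "finite I" using I finite_subset by blast
    then have "Min I \<in> I" using 4 by simp
    then have "card (I - {Min I}) < card I" using \<open>finite I\<close> by (rule card_Diff1_less[rotated])
    then have "\<rho> b (\<rho> (Tb 0 {Min I}) (bv (k, I - {Min I}, (0, 0, 0, 0)))) unit_key = 0"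
      using I \<open>Min I \<in> I\<close> by (intro rho_unit_coeff_step[OF b] inM_bv_unit less.hyps) auto
    then show ?thesis using rho_eta_Min_bv[OF I 4] by simp
  qed
qed

lemma rho_lin_comb:
  assumes b: "gvalid b" and "finite S" and "\<And>x. x \<in> S \<Longrightarrow> inM 0 0 (h x)"
  shows "\<rho> b (\<Sum>x\<in>S. sc (c x) (h x)) = (\<Sum>x\<in>S. sc (c x) (\<rho> b (h x)))"
  using assms(2,3)
proof (induction S rule: finite_induct)
  case empty
  have "\<rho> b (0 + 0) = \<rho> b 0 + \<rho> b 0" by (rule rho_add[OF b]) simp_all
  then show ?case by simp
next
  case (insert x F)
  have "inM 0 0 (\<Sum>x\<in>F. sc (c x) (h x))" using insert.prems by (intro inM_sum inM_sc) auto
  then show ?case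
    using insert rho_add[OF b inM_sc] rho_sc[OF b] by simp
qed

lemma rho_augmentation_ideal:
  assumes b: "gvalid b" and m: "inM 0 0 m"
  shows "\<rho> b m \<in> augmentation_ideal"
proof -
  have fin: "finite (supp m)" using m by (rule inM_finite_supp)
  have basis: "inM 0 0 (bv x) \<and> \<rho> b (bv x) unit_key = 0" if "x \<in> supp m" for x
  proof -
    obtain k I e where x: "x = (k, I, e)" by (cases x)
    have I: "I \<subseteq> {1..4}" and "bideg e = (0, 0)" using inM_supp_D[OF m] that x by auto
    then have "e = (0, 0, 0, 0)" by (cases e) auto
    then show ?thesis using inM_bv_unit[OF I] rho_basis_unit_coeff[OF I b] x by simp
  qed
  have "\<rho> b m = \<rho> b (\<Sum>x\<in>supp m. sc (m x) (bv x))"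
    using lin_bv_self[OF fin] unfolding lin_def by (rule arg_cong[symmetric])
  also have "\<dots> = (\<Sum>x\<in>supp m. sc (m x) (\<rho> b (bv x)))"
    using basis by (intro rho_lin_comb[OF b fin]) blast
  finally have "\<rho> b m = (\<Sum>x\<in>supp m. sc (m x) (\<rho> b (bv x)))" .
  then have "\<rho> b m unit_key = 0" using basis by (simp add: sum_fun_apply sc_apply)
  then show ?thesis using rho_inM[OF b m] by (simp add: augmentation_ideal_def)
qed

end

section \<open>Exact arithmetic on certificates\<close>

type_synonym gint = "int \<times> int"

type_synonym ckey = "nat \<times> nat list \<times> mon"

type_synonym celt = "(ckey \<times> gint) list"

definition gauss :: "gint \<Rightarrow> complex" where
  "gauss z = Complex (of_int (fst z)) (of_int (snd z))"

definition gint_mul :: "gint \<Rightarrow> gint \<Rightarrow> gint" where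
  "gint_mul z w = (fst z * fst w - snd z * snd w, fst z * snd w + snd z * fst w)"

definition gint_add :: "gint \<Rightarrow> gint \<Rightarrow> gint" where
  "gint_add z w = (fst z + fst w, snd z + snd w)"

definition gint_cnj :: "gint \<Rightarrow> gint" where
  "gint_cnj z = (fst z, - snd z)"

lemma gauss_mul: "gauss (gint_mul z w) = gauss z * gauss w"
  and gauss_add: "gauss (gint_add z w) = gauss z + gauss w"
  and gauss_of_int [simp]: "gauss (d, 0) = of_int d"
  and gauss_i [simp]: "gauss (0, 1) = \<i>" "gauss (0, -1) = - \<i>"
  by (simp_all add: gauss_def gint_mul_def gint_add_def gint_cnj_def complex_eq_iff)

text \<open>A certificate entry \<open>((k, L, e), z)\<close> with \<open>L\<close> strictly sorted stands for
  \<open>z / 2\<^bsup>k+4\<^esup> \<Theta>\<^sup>k \<eta>\<^sub>L \<otimes> e\<close>. The factor \<open>2\<^sup>-\<^sup>k\<close> absorbs the \<open>-1/2\<close> of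
  \<open>\<eta>\<^sub>j\<^sup>2 = -\<Theta>/2\<close>, so right multiplication by \<open>\<eta>\<^sub>j\<close> keeps all coefficients
  Gaussian integers and certificates can be checked by evaluation.\<close>
fun decode_key :: "ckey \<Rightarrow> key" where
  "decode_key (k, L, e) = (k, set L, e)"

definition canonical :: "ckey \<Rightarrow> bool" where
  "canonical x \<longleftrightarrow> sorted_wrt (<) (fst (snd x))"

definition cval :: "gint \<Rightarrow> nat \<Rightarrow> complex" where
  "cval z k = gauss z / 2 ^ (k + 4)"

definition decode :: "celt \<Rightarrow> elt" where
  "decode xs = sum_list (map (\<lambda>(x, z). sc (cval z (fst x)) (bv (decode_key x))) xs)"

lemma decode_Nil [simp]: "decode [] = 0"
  and decode_Cons [simp]: "decode ((x, z) # xs) = sc (cval z (fst x)) (bv (decode_key x)) + decode xs"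
  and decode_append [simp]: "decode (xs @ ys) = decode xs + decode ys"
  by (simp_all add: decode_def)

lemma decode_concat: "decode (concat xss) = sum_list (map decode xss)"
  by (induction xss) auto

lemma finite_supp_decode: "finite (supp (decode xs))"
  by (induction xs) (auto intro!: finite_supp_add finite_supp_sc)

definition c_scale :: "gint \<Rightarrow> celt \<Rightarrow> celt" where
  "c_scale d xs = map (\<lambda>(y, z). (y, gint_mul d z)) xs"

lemma decode_c_scale [simp]: "decode (c_scale d xs) = sc (gauss d) (decode xs)"
  by (induction xs) (auto simp: c_scale_def sc_add_right cval_def gauss_mul)

fun c_rmul :: "nat \<Rightarrow> ckey \<Rightarrow> celt" where
  "c_rmul j (k, L, e) =
     (let s = (if even (length (filter (\<lambda>i. j < i) L)) then 1 else -1) in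
      if j \<notin> set L then [((k, insort j L, e), (s, 0))]
      else [((Suc k, remove1 j L, e), (- s, 0))])"

lemma cnt_gt_list: "distinct L \<Longrightarrow> cnt_gt (set L) j = length (filter (\<lambda>i. j < i) L)"
  using distinct_card[of "filter (\<lambda>i. j < i) L"] by (simp add: cnt_gt_def)

lemma decode_c_rmul:
  assumes "sorted_wrt (<) L"
  shows "decode (c_rmul j (k, L, e)) = sc (cval (1, 0) k) (rmul_eta_b j (k, set L, e))"
proof -
  have "distinct L" using assms strict_sorted_iff by blast
  then show ?thesis
    by (auto simp: power_add cnt_gt_list set_insort_key cval_def Let_def power_Suc field_simps)
qed

definition w_entries :: "(nat \<times> nat \<times> nat \<times> gint) list" where
  "w_entries = [(1,1,1,(0,1)), (1,1,2,(1,0)), (1,2,3,(0,1)), (1,2,4,(-1,0)),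
                (2,1,3,(0,1)), (2,1,4,(1,0)), (2,2,1,(0,-1)), (2,2,2,(1,0))]"

lemma sum_w_entries:
  fixes F :: "nat \<Rightarrow> nat \<Rightarrow> nat \<Rightarrow> complex \<Rightarrow> 'a::comm_monoid_add"
  assumes "\<And>a b j. F a b j 0 = 0"
  shows "sum_list (map (\<lambda>(a, b, j, w). F a b j (gauss w)) w_entries)
    = (\<Sum>a\<in>{1, 2}. \<Sum>b\<in>{1, 2}. \<Sum>j\<in>{1..4}. F a b j (wc a b j))"
proof -
  have "{1..4::nat} = {1, 2, 3, 4}" by auto
  then show ?thesis using assms by (simp add: w_entries_def wc_def add.assoc)
qed

fun dcoef_int :: "nat \<Rightarrow> nat \<Rightarrow> mon \<Rightarrow> int" where
  "dcoef_int a b (p1, p2, q1, q2) = int (if a = 1 then p1 else p2) * int (if b = 1 then q1 else q2)"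

lemma of_int_dcoef_int: "of_int (dcoef_int a b e) = dcoef a b e"
  by (cases e) simp

definition c_nabla_b :: "ckey \<Rightarrow> celt" where
  "c_nabla_b x = (case x of (k, L, e) \<Rightarrow> concat (map (\<lambda>(a, b, j, w).
      if dcoef_int a b e = 0 then []
      else c_scale (gint_mul w (dcoef_int a b e, 0)) (c_rmul j (k, L, dmon a b e))) w_entries))"

lemma decode_c_nabla_b:
  assumes "sorted_wrt (<) L"
  shows "decode (c_nabla_b (k, L, e)) = sc (cval (1, 0) k) (nabla_b (k, set L, e))"
proof -
  let ?R = "\<lambda>a b j. sc (cval (1, 0) k) (rmul_eta_b j (k, set L, dmon a b e))"
  have "decode (c_nabla_b (k, L, e)) =
      sum_list (map (\<lambda>(a, b, j, w). sc (gauss w * dcoef a b e) (?R a b j)) w_entries)"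
    unfolding c_nabla_b_def prod.case decode_concat map_map
    by (rule arg_cong[where f = sum_list], rule map_cong)
      (auto simp: gauss_mul of_int_dcoef_int[symmetric] decode_c_rmul[OF assms] mult_ac
        simp del: c_rmul.simps)
  also have "\<dots> = (\<Sum>a\<in>{1, 2}. \<Sum>b\<in>{1, 2}. \<Sum>j\<in>{1..4}. sc (wc a b j * dcoef a b e) (?R a b j))"
    by (rule sum_w_entries) simp
  also have "\<dots> = sc (cval (1, 0) k) (nabla_b (k, set L, e))"
    by (simp only: nabla_b.simps sc_sum_right sc_sc mult.commute)
  finally show ?thesis .
qed

definition c_lin :: "(ckey \<Rightarrow> celt) \<Rightarrow> celt \<Rightarrow> celt" where
  "c_lin F xs = concat (map (\<lambda>(x, z). c_scale z (F x)) xs)"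

lemma decode_c_lin:
  assumes "\<And>x z. (x, z) \<in> set xs \<Longrightarrow> decode (F x) = sc (cval (1, 0) (fst x)) (G (decode_key x))"
  shows "decode (c_lin F xs) = lin G (decode xs)"
  using assms
proof (induction xs)
  case (Cons p xs)
  obtain x z where p: "p = (x, z)" by (cases p)
  have "decode (F x) = sc (cval (1, 0) (fst x)) (G (decode_key x))"
    by (rule Cons.prems[of x z]) (simp add: p)
  moreover have "decode (c_lin F xs) = lin G (decode xs)"
    using Cons.prems by (intro Cons.IH) (meson list.set_intros(2))
  moreover have "cval z (fst x) = gauss z * cval (1, 0) (fst x)"
    by (simp add: cval_def gauss_def complex_eq_iff)
  ultimately show ?case
    by (simp add: c_lin_def p lin_add[OF _ finite_supp_decode] finite_supp_sc lin_sc)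
qed (simp add: c_lin_def)

definition c_nabla :: "celt \<Rightarrow> celt" where
  "c_nabla xs = c_lin c_nabla_b xs"

lemma decode_c_nabla:
  assumes "list_all canonical (map fst xs)"
  shows "decode (c_nabla xs) = nabla (decode xs)"
  unfolding c_nabla_def nabla_def
proof (rule decode_c_lin)
  fix x z assume "(x, z) \<in> set xs"
  then have "canonical x" using assms by (auto simp: list_all_iff)
  then show "decode (c_nabla_b x) = sc (cval (1, 0) (fst x)) (nabla_b (decode_key x))"
    by (cases x) (simp add: canonical_def decode_c_nabla_b)
qed

definition c_coeff :: "celt \<Rightarrow> ckey \<Rightarrow> gint" where
  "c_coeff xs y = foldr gint_add (map snd (filter (\<lambda>p. fst p = y) xs)) (0, 0)"

definition c_equal :: "celt \<Rightarrow> celt \<Rightarrow> bool" where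
  "c_equal xs ys \<longleftrightarrow> list_all canonical (map fst xs) \<and> list_all canonical (map fst ys) \<and>
     list_all (\<lambda>y. c_coeff xs y = c_coeff ys y) (map fst (xs @ ys))"

lemma decode_apply:
  "decode xs z = sum_list (map (\<lambda>p. cval (snd p) (fst (fst p))) (filter (\<lambda>p. decode_key (fst p) = z) xs))"
  by (induction xs) (auto simp: fun_apply_simps sc_apply bv_apply)

lemma sum_list_cval_c_coeff:
  "sum_list (map (\<lambda>p. cval (snd p) (fst (fst p))) (filter (\<lambda>p. fst p = y) xs)) = cval (c_coeff xs y) (fst y)"
proof -
  have "cval (gint_add z w) k = cval z k + cval w k" "cval (0, 0) k = 0" for z w k
    by (simp_all add: cval_def gauss_add add_divide_distrib)
  then show ?thesis by (induction xs) (auto simp: c_coeff_def)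
qed

lemma canonical_decode_key_inj: "canonical x \<Longrightarrow> canonical y \<Longrightarrow> decode_key x = decode_key y \<Longrightarrow> x = y"
  by (cases x; cases y) (auto simp: canonical_def intro: strict_sorted_equal)

lemma c_equal_decode:
  assumes "c_equal xs ys"
  shows "decode xs = decode ys"
proof
  fix z
  have cx: "\<And>p. p \<in> set xs \<Longrightarrow> canonical (fst p)" and cy: "\<And>p. p \<in> set ys \<Longrightarrow> canonical (fst p)"
    using assms by (auto simp: c_equal_def list_all_iff)
  show "decode xs z = decode ys z"
  proof (cases "\<exists>y\<in>set (map fst (xs @ ys)). decode_key y = z")
    case True
    then obtain y where y: "y \<in> set (map fst (xs @ ys))" "decode_key y = z" by blast
    then have "canonical y" using cx cy by auto
    then have key: "filter (\<lambda>p. decode_key (fst p) = z) zs = filter (\<lambda>p. fst p = y) zs"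
      if "\<And>p. p \<in> set zs \<Longrightarrow> canonical (fst p)" for zs
      using y(2) that canonical_decode_key_inj by (metis (mono_tags, lifting) filter_cong)
    have "c_coeff xs y = c_coeff ys y" using assms y(1) by (auto simp: c_equal_def list_all_iff)
    then show ?thesis using key[OF cx] key[OF cy] by (simp add: decode_apply sum_list_cval_c_coeff)
  next
    case False
    then have "filter (\<lambda>p. decode_key (fst p) = z) xs = []" "filter (\<lambda>p. decode_key (fst p) = z) ys = []"
      by (auto simp: filter_empty_conv)
    then show ?thesis by (simp add: decode_apply)
  qed
qed

definition c_inM :: "nat \<Rightarrow> nat \<Rightarrow> celt \<Rightarrow> bool" where
  "c_inM m n xs = list_all (\<lambda>(x, c). canonical x \<and> list_all (\<lambda>i. 1 \<le> i \<and> i \<le> 4) (fst (snd x))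
      \<and> bideg (snd (snd x)) = (m, n)) xs"

lemma inM_decode: "c_inM m n xs \<Longrightarrow> inM m n (decode xs)"
proof (induction xs)
  case (Cons p xs)
  obtain k L e c where p: "p = ((k, L, e), c)" by (cases p) auto
  have "set L \<subseteq> {1..4}" "bideg e = (m, n)" using Cons.prems by (auto simp: c_inM_def p list_all_iff)
  then have "inM m n (bv (k, set L, e))" by (rule inM_bv)
  moreover have "c_inM m n xs" using Cons.prems by (simp add: c_inM_def)
  ultimately show ?case using Cons.IH by (simp add: p inM_add inM_sc)
qed simp

lemma c_inM_canonical: "c_inM m n xs \<Longrightarrow> list_all canonical (map fst xs)"
  by (induction xs) (auto simp: c_inM_def)

definition c_eta_lift :: "nat \<Rightarrow> nat \<Rightarrow> nat list \<Rightarrow> celt" where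
  "c_eta_lift j k L = [((k, L, mon_xy a b), gint_mul (8, 0) (gint_cnj w)). (a, b, j', w) \<leftarrow> w_entries, j' = j]"

lemma decode_c_eta_lift: "decode (c_eta_lift j k L) = sc (cval (1, 0) k) (sc 16 (eta_lift j k (set L)))"
proof -
  have pairs: "{1, 2} \<times> {1, 2} = {(1, 1), (1, 2), (2, 1), (2, 2::nat)}" by auto
  consider "j \<in> {1, 2, 3, 4}" | "j \<notin> {1, 2, 3, 4}" by blast
  then show ?thesis
    unfolding eta_lift_def pairs
    by (auto simp: c_eta_lift_def w_entries_def wc_def fun_eq_iff fun_apply_simps sc_apply bv_apply
        cval_def gint_mul_def gint_cnj_def gauss_def complex_eq_iff mon_xy_def)
qed

fun c_section :: "ckey \<Rightarrow> celt" where
  "c_section (k, L, e) =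
     (if L \<noteq> [] then c_eta_lift (last L) k (butlast L)
      else if k = 0 then [] else c_scale (-1, 0) (c_eta_lift 1 (k - 1) [1]))"

lemma sorted_wrt_less_last:
  assumes "sorted_wrt (<) L" "L \<noteq> []"
  shows "Max (set L) = last L" "set L - {last L} = set (butlast L)"
proof -
  have L: "L = butlast L @ [last L]" using assms(2) by simp
  then have "sorted_wrt (<) (butlast L @ [last L])" using assms(1) by simp
  then have less: "\<And>x. x \<in> set (butlast L) \<Longrightarrow> x < last L" by (simp add: sorted_wrt_append)
  have set_L: "set L = insert (last L) (set (butlast L))" by (subst L) auto
  show "Max (set L) = last L"
    using less by (intro Max_eqI) (auto simp: set_L less_imp_le)
  show "set L - {last L} = set (butlast L)"
    using less set_L by auto
qed

lemma decode_c_section: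
  assumes "sorted_wrt (<) L"
  shows "decode (c_section (k, L, e)) = sc (cval (1, 0) k) (sc 16 (nabla_section (k, set L, e)))"
proof (cases "L = []")
  case True
  show ?thesis
  proof (cases k)
    case (Suc k')
    have "- cval (1, 0) k' = cval (1, 0) k * -2" by (simp add: cval_def Suc power_add field_simps)
    then show ?thesis
      using True Suc by (simp add: decode_c_eta_lift mult_ac)
  qed (simp add: True)
next
  case False
  then show ?thesis
    using sorted_wrt_less_last[OF assms False] by (simp add: decode_c_eta_lift)
qed

lemma decode_c_lin_c_section:
  assumes "list_all canonical (map fst xs)"
  shows "decode (c_lin c_section xs) = sc 16 (lin nabla_section (decode xs))"
proof -
  have "decode (c_lin c_section xs) = lin (\<lambda>x. sc 16 (nabla_section x)) (decode xs)"
  proof (rule decode_c_lin)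
    fix x z assume "(x, z) \<in> set xs"
    moreover obtain k L e where "x = (k, L, e)" by (cases x)
    ultimately show "decode (c_section x) = sc (cval (1, 0) (fst x)) (sc 16 (nabla_section (decode_key x)))"
      using assms decode_c_section[of L k e] by (auto simp: list_all_iff canonical_def)
  qed
  then show ?thesis by (simp add: lin_def sc_sum_right mult.commute)
qed

section \<open>The kernel of \<open>\<nabla>\<close> on \<open>M\<^sub>A\<^sup>1\<^sup>,\<^sup>1\<close>\<close>

text \<open>The values \<open>H (\<eta>\<^sub>L \<otimes> e)\<close>, computed offline by solving \<open>\<nabla> H = id - s \<nabla>\<close>; for
  \<open>L = []\<close> and \<open>L = [1]\<close> the right-hand side vanishes and the table has no entry.\<close>
definition homotopy_table :: "((nat list \<times> mon) \<times> celt) list" where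
  "homotopy_table = [(([2], (1, 0, 1, 0)), [((0, [], (2, 0, 2, 0)), (4, 0))]),
    (([2], (0, 1, 0, 1)), [((0, [], (0, 2, 0, 2)), (4, 0))]),
    (([3], (1, 0, 1, 0)), [((0, [], (1, 1, 2, 0)), (0, (-4))), ((0, [], (2, 0, 1, 1)), (0, (-4)))]),
    (([3], (1, 0, 0, 1)), [((0, [], (0, 2, 0, 2)), (0, 1)), ((0, [], (0, 2, 2, 0)), (0, (-1))), ((0, [], (1, 1, 1, 1)), (0, (-4))), ((0, [], (2, 0, 0, 2)), (0, (-1))), ((0, [], (2, 0, 2, 0)), (0, 1))]),
    (([3], (0, 1, 1, 0)), [((0, [], (0, 2, 0, 2)), (0, 1)), ((0, [], (0, 2, 2, 0)), (0, (-1))), ((0, [], (1, 1, 1, 1)), (0, (-4))), ((0, [], (2, 0, 0, 2)), (0, (-1))), ((0, [], (2, 0, 2, 0)), (0, 1))]),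
    (([3], (0, 1, 0, 1)), [((0, [], (0, 2, 1, 1)), (0, (-4))), ((0, [], (1, 1, 0, 2)), (0, (-4)))]),
    (([4], (1, 0, 1, 0)), [((0, [], (1, 1, 2, 0)), (4, 0)), ((0, [], (2, 0, 1, 1)), ((-4), 0))]),
    (([4], (1, 0, 0, 1)), [((0, [], (0, 2, 0, 2)), ((-1), 0)), ((0, [], (0, 2, 2, 0)), (1, 0)), ((0, [], (1, 1, 1, 1)), (4, 0)), ((0, [], (2, 0, 0, 2)), ((-3), 0)), ((0, [], (2, 0, 2, 0)), ((-1), 0))]),
    (([4], (0, 1, 1, 0)), [((0, [], (0, 2, 0, 2)), (1, 0)), ((0, [], (0, 2, 2, 0)), (3, 0)), ((0, [], (1, 1, 1, 1)), ((-4), 0)), ((0, [], (2, 0, 0, 2)), ((-1), 0)), ((0, [], (2, 0, 2, 0)), (1, 0))]),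
    (([4], (0, 1, 0, 1)), [((0, [], (0, 2, 1, 1)), (4, 0)), ((0, [], (1, 1, 0, 2)), ((-4), 0))]),
    (([1, 2], (1, 0, 1, 0)), [((0, [1], (2, 0, 2, 0)), (4, 0))]),
    (([1, 2], (0, 1, 0, 1)), [((0, [1], (0, 2, 0, 2)), (4, 0))]),
    (([1, 3], (1, 0, 1, 0)), [((0, [1], (1, 1, 2, 0)), (0, (-4))), ((0, [1], (2, 0, 1, 1)), (0, (-4)))]),
    (([1, 3], (1, 0, 0, 1)), [((0, [1], (0, 2, 0, 2)), (0, 1)), ((0, [1], (0, 2, 2, 0)), (0, (-1))), ((0, [1], (1, 1, 1, 1)), (0, (-4))), ((0, [1], (2, 0, 0, 2)), (0, (-1))), ((0, [1], (2, 0, 2, 0)), (0, 1))]),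
    (([1, 3], (0, 1, 1, 0)), [((0, [1], (0, 2, 0, 2)), (0, 1)), ((0, [1], (0, 2, 2, 0)), (0, (-1))), ((0, [1], (1, 1, 1, 1)), (0, (-4))), ((0, [1], (2, 0, 0, 2)), (0, (-1))), ((0, [1], (2, 0, 2, 0)), (0, 1))]),
    (([1, 3], (0, 1, 0, 1)), [((0, [1], (0, 2, 1, 1)), (0, (-4))), ((0, [1], (1, 1, 0, 2)), (0, (-4)))]),
    (([1, 4], (1, 0, 1, 0)), [((0, [1], (1, 1, 2, 0)), (4, 0)), ((0, [1], (2, 0, 1, 1)), ((-4), 0))]),
    (([1, 4], (1, 0, 0, 1)), [((0, [1], (0, 2, 0, 2)), ((-1), 0)), ((0, [1], (0, 2, 2, 0)), (1, 0)), ((0, [1], (1, 1, 1, 1)), (4, 0)), ((0, [1], (2, 0, 0, 2)), ((-3), 0)), ((0, [1], (2, 0, 2, 0)), ((-1), 0))]),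
    (([1, 4], (0, 1, 1, 0)), [((0, [1], (0, 2, 0, 2)), (1, 0)), ((0, [1], (0, 2, 2, 0)), (3, 0)), ((0, [1], (1, 1, 1, 1)), ((-4), 0)), ((0, [1], (2, 0, 0, 2)), ((-1), 0)), ((0, [1], (2, 0, 2, 0)), (1, 0))]),
    (([1, 4], (0, 1, 0, 1)), [((0, [1], (0, 2, 1, 1)), (4, 0)), ((0, [1], (1, 1, 0, 2)), ((-4), 0))]),
    (([2, 3], (1, 0, 1, 0)), [((0, [2], (1, 1, 2, 0)), (0, (-4))), ((0, [2], (2, 0, 1, 1)), (0, (-4)))]),
    (([2, 3], (1, 0, 0, 1)), [((0, [1], (0, 2, 0, 2)), (1, 0)), ((0, [1], (2, 0, 2, 0)), ((-1), 0)), ((0, [2], (0, 2, 2, 0)), (0, (-1))), ((0, [2], (1, 1, 1, 1)), (0, (-4))), ((0, [2], (2, 0, 0, 2)), (0, (-1)))]),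
    (([2, 3], (0, 1, 1, 0)), [((0, [1], (0, 2, 0, 2)), (1, 0)), ((0, [1], (2, 0, 2, 0)), ((-1), 0)), ((0, [2], (0, 2, 2, 0)), (0, (-1))), ((0, [2], (1, 1, 1, 1)), (0, (-4))), ((0, [2], (2, 0, 0, 2)), (0, (-1)))]),
    (([2, 3], (0, 1, 0, 1)), [((0, [2], (0, 2, 1, 1)), (0, (-4))), ((0, [2], (1, 1, 0, 2)), (0, (-4)))]),
    (([2, 4], (1, 0, 1, 0)), [((0, [2], (1, 1, 2, 0)), (4, 0)), ((0, [2], (2, 0, 1, 1)), ((-4), 0))]),
    (([2, 4], (1, 0, 0, 1)), [((0, [1], (0, 2, 0, 2)), (0, 1)), ((0, [1], (2, 0, 2, 0)), (0, (-1))), ((0, [2], (0, 2, 2, 0)), (1, 0)), ((0, [2], (1, 1, 1, 1)), (4, 0)), ((0, [2], (2, 0, 0, 2)), ((-3), 0))]),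
    (([2, 4], (0, 1, 1, 0)), [((0, [1], (0, 2, 0, 2)), (0, (-1))), ((0, [1], (2, 0, 2, 0)), (0, 1)), ((0, [2], (0, 2, 2, 0)), (3, 0)), ((0, [2], (1, 1, 1, 1)), ((-4), 0)), ((0, [2], (2, 0, 0, 2)), ((-1), 0))]),
    (([2, 4], (0, 1, 0, 1)), [((0, [2], (0, 2, 1, 1)), (4, 0)), ((0, [2], (1, 1, 0, 2)), ((-4), 0))]),
    (([3, 4], (1, 0, 1, 0)), [((0, [1], (0, 2, 2, 0)), (1, 0)), ((0, [1], (1, 1, 1, 1)), (4, 0)), ((0, [1], (2, 0, 0, 2)), (1, 0)), ((0, [1], (2, 0, 2, 0)), ((-2), 0)), ((0, [2], (0, 2, 2, 0)), (0, (-1))), ((0, [2], (1, 1, 1, 1)), (0, (-4))), ((0, [2], (2, 0, 0, 2)), (0, (-1))), ((0, [3], (1, 1, 2, 0)), (8, 0))]),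
    (([3, 4], (1, 0, 0, 1)), [((0, [1], (0, 2, 1, 1)), (4, 0)), ((0, [1], (1, 1, 0, 2)), (4, 0)), ((0, [1], (1, 1, 2, 0)), ((-4), 0)), ((0, [1], (2, 0, 1, 1)), ((-4), 0)), ((0, [2], (0, 2, 1, 1)), (0, (-4))), ((0, [2], (1, 1, 0, 2)), (0, (-4))), ((0, [2], (1, 1, 2, 0)), (0, (-4))), ((0, [2], (2, 0, 1, 1)), (0, (-4))), ((0, [3], (0, 2, 2, 0)), (4, 0)), ((0, [3], (1, 1, 1, 1)), (16, 0))]),
    (([3, 4], (0, 1, 1, 0)), [((0, [3], (0, 2, 2, 0)), (4, 0))]),
    (([3, 4], (0, 1, 0, 1)), [((0, [1], (0, 2, 0, 2)), (2, 0)), ((0, [1], (0, 2, 2, 0)), ((-1), 0)), ((0, [1], (1, 1, 1, 1)), ((-4), 0)), ((0, [1], (2, 0, 0, 2)), ((-1), 0)), ((0, [2], (0, 2, 2, 0)), (0, (-1))), ((0, [2], (1, 1, 1, 1)), (0, (-4))), ((0, [2], (2, 0, 0, 2)), (0, (-1))), ((0, [3], (0, 2, 1, 1)), (8, 0))]),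
    (([1, 2, 3], (1, 0, 1, 0)), [((0, [1, 2], (1, 1, 2, 0)), (0, (-4))), ((0, [1, 2], (2, 0, 1, 1)), (0, (-4)))]),
    (([1, 2, 3], (1, 0, 0, 1)), [((0, [1, 2], (0, 2, 2, 0)), (0, (-1))), ((0, [1, 2], (1, 1, 1, 1)), (0, (-4))), ((0, [1, 2], (2, 0, 0, 2)), (0, (-1))), ((1, [], (0, 2, 0, 2)), ((-1), 0)), ((1, [], (2, 0, 2, 0)), (1, 0))]),
    (([1, 2, 3], (0, 1, 1, 0)), [((0, [1, 2], (0, 2, 2, 0)), (0, (-1))), ((0, [1, 2], (1, 1, 1, 1)), (0, (-4))), ((0, [1, 2], (2, 0, 0, 2)), (0, (-1))), ((1, [], (0, 2, 0, 2)), ((-1), 0)), ((1, [], (2, 0, 2, 0)), (1, 0))]),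
    (([1, 2, 3], (0, 1, 0, 1)), [((0, [1, 2], (0, 2, 1, 1)), (0, (-4))), ((0, [1, 2], (1, 1, 0, 2)), (0, (-4)))]),
    (([1, 2, 4], (1, 0, 1, 0)), [((0, [1, 2], (1, 1, 2, 0)), (4, 0)), ((0, [1, 2], (2, 0, 1, 1)), ((-4), 0))]),
    (([1, 2, 4], (1, 0, 0, 1)), [((0, [1, 2], (0, 2, 2, 0)), (1, 0)), ((0, [1, 2], (1, 1, 1, 1)), (4, 0)), ((0, [1, 2], (2, 0, 0, 2)), ((-3), 0)), ((1, [], (0, 2, 0, 2)), (0, (-1))), ((1, [], (2, 0, 2, 0)), (0, 1))]),
    (([1, 2, 4], (0, 1, 1, 0)), [((0, [1, 2], (0, 2, 2, 0)), (3, 0)), ((0, [1, 2], (1, 1, 1, 1)), ((-4), 0)), ((0, [1, 2], (2, 0, 0, 2)), ((-1), 0)), ((1, [], (0, 2, 0, 2)), (0, 1)), ((1, [], (2, 0, 2, 0)), (0, (-1)))]),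
    (([1, 2, 4], (0, 1, 0, 1)), [((0, [1, 2], (0, 2, 1, 1)), (4, 0)), ((0, [1, 2], (1, 1, 0, 2)), ((-4), 0))]),
    (([1, 3, 4], (1, 0, 1, 0)), [((0, [1, 2], (0, 2, 2, 0)), (0, (-1))), ((0, [1, 2], (1, 1, 1, 1)), (0, (-4))), ((0, [1, 2], (2, 0, 0, 2)), (0, (-1))), ((0, [1, 3], (1, 1, 2, 0)), (8, 0)), ((1, [], (0, 2, 2, 0)), ((-1), 0)), ((1, [], (1, 1, 1, 1)), ((-4), 0)), ((1, [], (2, 0, 0, 2)), ((-1), 0)), ((1, [], (2, 0, 2, 0)), (2, 0))]),
    (([1, 3, 4], (1, 0, 0, 1)), [((0, [1, 2], (0, 2, 1, 1)), (0, (-4))), ((0, [1, 2], (1, 1, 0, 2)), (0, (-4))), ((0, [1, 2], (1, 1, 2, 0)), (0, (-4))), ((0, [1, 2], (2, 0, 1, 1)), (0, (-4))), ((0, [1, 3], (0, 2, 2, 0)), (4, 0)), ((0, [1, 3], (1, 1, 1, 1)), (16, 0)), ((1, [], (0, 2, 1, 1)), ((-4), 0)), ((1, [], (1, 1, 0, 2)), ((-4), 0)), ((1, [], (1, 1, 2, 0)), (4, 0)), ((1, [], (2, 0, 1, 1)), (4, 0))]),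
    (([1, 3, 4], (0, 1, 1, 0)), [((0, [1, 3], (0, 2, 2, 0)), (4, 0))]),
    (([1, 3, 4], (0, 1, 0, 1)), [((0, [1, 2], (0, 2, 2, 0)), (0, (-1))), ((0, [1, 2], (1, 1, 1, 1)), (0, (-4))), ((0, [1, 2], (2, 0, 0, 2)), (0, (-1))), ((0, [1, 3], (0, 2, 1, 1)), (8, 0)), ((1, [], (0, 2, 0, 2)), ((-2), 0)), ((1, [], (0, 2, 2, 0)), (1, 0)), ((1, [], (1, 1, 1, 1)), (4, 0)), ((1, [], (2, 0, 0, 2)), (1, 0))]),
    (([2, 3, 4], (1, 0, 1, 0)), [((0, [1, 2], (0, 2, 2, 0)), ((-1), 0)), ((0, [1, 2], (1, 1, 1, 1)), ((-4), 0)), ((0, [1, 2], (2, 0, 0, 2)), ((-1), 0)), ((0, [2, 3], (1, 1, 2, 0)), (8, 0)), ((1, [], (0, 2, 2, 0)), (0, 1)), ((1, [], (1, 1, 1, 1)), (0, 4)), ((1, [], (2, 0, 0, 2)), (0, 1)), ((1, [], (2, 0, 2, 0)), (0, 2))]),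
    (([2, 3, 4], (1, 0, 0, 1)), [((0, [1, 2], (0, 2, 1, 1)), ((-4), 0)), ((0, [1, 2], (1, 1, 0, 2)), ((-4), 0)), ((0, [1, 2], (1, 1, 2, 0)), (4, 0)), ((0, [1, 2], (2, 0, 1, 1)), (4, 0)), ((0, [2, 3], (0, 2, 2, 0)), (4, 0)), ((0, [2, 3], (1, 1, 1, 1)), (16, 0)), ((1, [], (0, 2, 1, 1)), (0, 4)), ((1, [], (1, 1, 0, 2)), (0, 4)), ((1, [], (1, 1, 2, 0)), (0, 4)), ((1, [], (2, 0, 1, 1)), (0, 4))]),
    (([2, 3, 4], (0, 1, 1, 0)), [((0, [2, 3], (0, 2, 2, 0)), (4, 0))]),
    (([2, 3, 4], (0, 1, 0, 1)), [((0, [1, 2], (0, 2, 2, 0)), (1, 0)), ((0, [1, 2], (1, 1, 1, 1)), (4, 0)), ((0, [1, 2], (2, 0, 0, 2)), (1, 0)), ((0, [2, 3], (0, 2, 1, 1)), (8, 0)), ((1, [], (0, 2, 0, 2)), (0, 2)), ((1, [], (0, 2, 2, 0)), (0, 1)), ((1, [], (1, 1, 1, 1)), (0, 4)), ((1, [], (2, 0, 0, 2)), (0, 1))]),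
    (([1, 2, 3, 4], (1, 0, 1, 0)), [((0, [1, 2, 3], (1, 1, 2, 0)), (8, 0)), ((1, [1], (0, 2, 2, 0)), (0, 1)), ((1, [1], (1, 1, 1, 1)), (0, 4)), ((1, [1], (2, 0, 0, 2)), (0, 1)), ((1, [1], (2, 0, 2, 0)), (0, 2)), ((1, [2], (0, 2, 2, 0)), (1, 0)), ((1, [2], (1, 1, 1, 1)), (4, 0)), ((1, [2], (2, 0, 0, 2)), (1, 0))]),
    (([1, 2, 3, 4], (1, 0, 0, 1)), [((0, [1, 2, 3], (0, 2, 2, 0)), (4, 0)), ((0, [1, 2, 3], (1, 1, 1, 1)), (16, 0)), ((1, [1], (0, 2, 1, 1)), (0, 4)), ((1, [1], (1, 1, 0, 2)), (0, 4)), ((1, [1], (1, 1, 2, 0)), (0, 4)), ((1, [1], (2, 0, 1, 1)), (0, 4)), ((1, [2], (0, 2, 1, 1)), (4, 0)), ((1, [2], (1, 1, 0, 2)), (4, 0)), ((1, [2], (1, 1, 2, 0)), ((-4), 0)), ((1, [2], (2, 0, 1, 1)), ((-4), 0))]),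
    (([1, 2, 3, 4], (0, 1, 1, 0)), [((0, [1, 2, 3], (0, 2, 2, 0)), (4, 0))]),
    (([1, 2, 3, 4], (0, 1, 0, 1)), [((0, [1, 2, 3], (0, 2, 1, 1)), (8, 0)), ((1, [1], (0, 2, 0, 2)), (0, 2)), ((1, [1], (0, 2, 2, 0)), (0, 1)), ((1, [1], (1, 1, 1, 1)), (0, 4)), ((1, [1], (2, 0, 0, 2)), (0, 1)), ((1, [2], (0, 2, 2, 0)), ((-1), 0)), ((1, [2], (1, 1, 1, 1)), ((-4), 0)), ((1, [2], (2, 0, 0, 2)), ((-1), 0))])]"

definition c_homotopy :: "nat list \<Rightarrow> mon \<Rightarrow> celt" where
  "c_homotopy L e = (case map_of homotopy_table (L, e) of Some v \<Rightarrow> v | None \<Rightarrow> [])"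

definition index_lists :: "nat list list" where
  "index_lists = subseqs [1, 2, 3, 4]"

definition mons11 :: "mon list" where
  "mons11 = [(1, 0, 1, 0), (1, 0, 0, 1), (0, 1, 1, 0), (0, 1, 0, 1)]"

definition mons22 :: "mon list" where
  "mons22 = [(a, 2 - a, b, 2 - b). a \<leftarrow> [0, 1, 2], b \<leftarrow> [0, 1, 2]]"

definition nabla_square_check :: "nat list \<Rightarrow> bool" where
  "nabla_square_check L \<longleftrightarrow> list_all (\<lambda>e. list_all canonical (map fst (c_nabla_b (0, L, e))) \<and>
       c_equal (c_nabla (c_nabla_b (0, L, e))) []) mons22"

definition homotopy_check :: "nat list \<Rightarrow> bool" where
  "homotopy_check L \<longleftrightarrow> list_all (\<lambda>e. c_inM 2 2 (c_homotopy L e) \<and>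
       list_all canonical (map fst (c_nabla_b (0, L, e))) \<and>
       c_equal (c_nabla (c_homotopy L e))
         (((0, L, e), (16, 0)) # c_scale (-1, 0) (c_lin c_section (c_nabla_b (0, L, e))))) mons11"

lemma index_lists_checked:
  "list_all (\<lambda>L. sorted_wrt (<) L \<and> nabla_square_check L \<and> homotopy_check L) index_lists"
  by code_simp

lemma mons11_complete:
  assumes "bideg e = (1, 1)"
  shows "e \<in> set mons11"
proof -
  obtain p1 p2 q1 q2 where e: "e = (p1, p2, q1, q2)" by (cases e)
  then have s: "p1 + p2 = 1" "q1 + q2 = 1" using assms by auto
  then have "p1 = 0 \<or> p1 = 1" "q1 = 0 \<or> q1 = 1" by arith+
  then show ?thesis using s unfolding e mons11_def by (elim disjE) simp_all
qed

lemma mons22_complete: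
  assumes "bideg e = (2, 2)"
  shows "e \<in> set mons22"
proof -
  obtain p1 p2 q1 q2 where e: "e = (p1, p2, q1, q2)" by (cases e)
  then have s: "p1 + p2 = 2" "q1 + q2 = 2" using assms by auto
  then have "p1 = 0 \<or> p1 = 1 \<or> p1 = 2" "q1 = 0 \<or> q1 = 1 \<or> q1 = 2" by arith+
  moreover have "set mons22 = {(0,2,0,2), (0,2,1,1), (0,2,2,0), (1,1,0,2), (1,1,1,1), (1,1,2,0),
      (2,0,0,2), (2,0,1,1), (2,0,2,0)}"
    by (simp add: mons22_def)
  ultimately show ?thesis using s unfolding e by (elim disjE) simp_all
qed

lemma index_list_of_set:
  assumes "I \<subseteq> {1..4}"
  shows "sorted_list_of_set I \<in> set index_lists" "set (sorted_list_of_set I) = I"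
    "sorted_wrt (<) (sorted_list_of_set I)"
proof -
  have "{1..4::nat} = set [1, 2, 3, 4]" by auto
  then have "I \<in> set ` set index_lists"
    using assms unfolding index_lists_def subseqs_powset by auto
  then obtain L where L: "L \<in> set index_lists" "I = set L" by blast
  moreover have "sorted_wrt (<) L"
    using L(1) index_lists_checked by (auto simp: list_all_iff)
  ultimately show "sorted_list_of_set I \<in> set index_lists" "set (sorted_list_of_set I) = I"
    "sorted_wrt (<) (sorted_list_of_set I)"
    by (simp_all add: sorted_list_of_set.idem_if_sorted_distinct strict_sorted_iff)
qed

lemma index_list_checks:
  assumes "I \<subseteq> {1..4}"
  shows "nabla_square_check (sorted_list_of_set I)" "homotopy_check (sorted_list_of_set I)"
  using index_list_of_set(1)[OF assms] index_lists_checked by (auto simp: list_all_iff)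

definition homotopy :: "key \<Rightarrow> elt" where
  "homotopy x = (case x of (k, I, e) \<Rightarrow> theta_shift k (decode (c_homotopy (sorted_list_of_set I) e)))"

lemma finite_supp_homotopy: "finite (supp (homotopy x))"
  by (cases x) (simp add: homotopy_def supp_theta_shift finite_supp_decode)

lemma inM_homotopy:
  assumes "I \<subseteq> {1..4}" "bideg e = (1, 1)"
  shows "inM 2 2 (homotopy (k, I, e))"
proof -
  have "c_inM 2 2 (c_homotopy (sorted_list_of_set I) e)"
    using index_list_checks(2)[OF assms(1)] mons11_complete[OF assms(2)]
    by (auto simp: homotopy_check_def list_all_iff)
  then show ?thesis by (simp add: homotopy_def inM_theta_shift inM_decode)
qed

lemma theta_shift_lin_nabla_section:
  assumes "\<And>x. x \<in> supp y \<Longrightarrow> (fst x, fst (snd x)) \<noteq> (0, {})"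
  shows "theta_shift k (lin nabla_section y) = lin nabla_section (theta_shift k y)"
proof -
  have "theta_shift k (lin nabla_section y) = lin (\<lambda>x. theta_shift k (nabla_section x)) y"
    by (rule lin_theta_shift_fun[symmetric])
  also have "\<dots> = lin (\<lambda>x. nabla_section (shift_key k x)) y"
  proof (rule lin_cong)
    fix x assume "x \<in> supp y"
    moreover obtain k' I e where "x = (k', I, e)" by (cases x)
    ultimately have "(k', I) \<noteq> (0, {})" using assms by fastforce
    then show "theta_shift k (nabla_section x) = nabla_section (shift_key k x)"
      using \<open>x = (k', I, e)\<close> nabla_section_theta_shift[of k' I k e] by (simp del: nabla_section.simps)
  qed
  also have "\<dots> = lin nabla_section (theta_shift k y)"
    by (rule lin_theta_shift[symmetric])
  finally show ?thesis .
qed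

lemma nabla_homotopy:
  assumes I: "I \<subseteq> {1..4}" and e: "bideg e = (1, 1)"
  shows "nabla (homotopy (k, I, e)) = bv (k, I, e) - lin nabla_section (nabla_b (k, I, e))"
proof -
  let ?L = "sorted_list_of_set I"
  have L: "set ?L = I" "sorted_wrt (<) ?L" using index_list_of_set[OF I] by auto
  have canon: "list_all canonical (map fst (c_nabla_b (0, ?L, e)))"
    and cert: "c_equal (c_nabla (c_homotopy ?L e))
      (((0, ?L, e), (16, 0)) # c_scale (-1, 0) (c_lin c_section (c_nabla_b (0, ?L, e))))"
    and valid: "c_inM 2 2 (c_homotopy ?L e)"
    using index_list_checks(2)[OF I] mons11_complete[OF e] by (auto simp: homotopy_check_def list_all_iff)
  let ?Y = "nabla_b (0, I, e)"
  have "decode (c_nabla_b (0, ?L, e)) = sc (1 / 16) ?Y"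
    using decode_c_nabla_b[OF L(2), of 0 e] L(1) by (simp add: cval_def)
  then have "nabla (decode (c_homotopy ?L e)) = bv (0, I, e) - lin nabla_section ?Y"
    using c_equal_decode[OF cert] L(1)
    by (simp add: decode_c_nabla[OF c_inM_canonical[OF valid], symmetric] decode_c_lin_c_section[OF canon]
        cval_def lin_sc sc_minus_one)
  then have "nabla (homotopy (k, I, e)) = bv (k, I, e) - theta_shift k (lin nabla_section ?Y)"
    by (simp add: homotopy_def nabla_theta_shift theta_shift_diff theta_shift_bv)
  also have "theta_shift k (lin nabla_section ?Y) = lin nabla_section (theta_shift k ?Y)"
  proof (rule theta_shift_lin_nabla_section)
    fix x assume "x \<in> supp ?Y"
    moreover obtain k' I' e' where "x = (k', I', e')" by (cases x)
    ultimately show "(fst x, fst (snd x)) \<noteq> (0, {})"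
      using nabla_b_unit_coeff[of "(0, I, e)" e'] by (auto simp: supp_def simp del: nabla_b.simps)
  qed
  also have "theta_shift k ?Y = nabla_b (k, I, e)"
    using nabla_b_theta_shift[of k "(0, I, e)"] by simp
  finally show ?thesis .
qed

lemma nabla_nabla_b:
  assumes I: "I \<subseteq> {1..4}" and e: "bideg e = (2, 2)"
  shows "nabla (nabla_b (k, I, e)) = 0"
proof -
  let ?L = "sorted_list_of_set I"
  have L: "set ?L = I" "sorted_wrt (<) ?L" using index_list_of_set[OF I] by auto
  have canon: "list_all canonical (map fst (c_nabla_b (0, ?L, e)))"
    and cert: "c_equal (c_nabla (c_nabla_b (0, ?L, e))) []"
    using index_list_checks(1)[OF I] mons22_complete[OF e] by (auto simp: nabla_square_check_def list_all_iff)
  have "sc (1 / 16) (nabla (nabla_b (0, I, e))) = nabla (decode (c_nabla_b (0, ?L, e)))"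
    using decode_c_nabla_b[OF L(2), of 0 e] L(1) by (simp add: cval_def nabla_sc)
  also have "\<dots> = 0"
    using c_equal_decode[OF cert] by (simp add: decode_c_nabla[OF canon, symmetric])
  finally have "sc 16 (sc (1 / 16) (nabla (nabla_b (0, I, e)))) = 0" by simp
  then have "nabla (nabla_b (0, I, e)) = 0" by simp
  then show ?thesis
    using nabla_b_theta_shift[of k "(0, I, e)"] by (simp add: nabla_theta_shift)
qed

lemma inM_homotopy_supp:
  assumes "inM 1 1 f" "x \<in> supp f"
  shows "inM 2 2 (homotopy x)" "nabla (homotopy x) = bv x - lin nabla_section (nabla_b x)"
proof -
  obtain k I e where x: "x = (k, I, e)" by (cases x)
  then have "I \<subseteq> {1..4}" "bideg e = (1, 1)" using inM_supp_D assms by blast+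
  then show "inM 2 2 (homotopy x)" "nabla (homotopy x) = bv x - lin nabla_section (nabla_b x)"
    using inM_homotopy nabla_homotopy x by auto
qed

lemma nabla_lin_homotopy:
  assumes f: "inM 1 1 f"
  shows "nabla (lin homotopy f) = f - lin nabla_section (nabla f)"
proof -
  have fin: "finite (supp f)" using f by (rule inM_finite_supp)
  have "nabla (lin homotopy f) = lin (\<lambda>x. nabla (homotopy x)) f"
    unfolding nabla_def by (rule lin_lin[OF fin finite_supp_homotopy])
  also have "\<dots> = lin (\<lambda>x. bv x - lin nabla_section (nabla_b x)) f"
    by (rule lin_cong) (rule inM_homotopy_supp(2)[OF f])
  also have "\<dots> = lin bv f - lin nabla_section (nabla f)"
    unfolding lin_diff_fun nabla_def by (simp add: lin_lin[OF fin finite_supp_nabla_b])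
  finally show ?thesis by (simp add: lin_bv_self[OF fin])
qed

lemma nabla_nabla:
  assumes g: "inM 2 2 g"
  shows "nabla (nabla g) = 0"
proof -
  have fin: "finite (supp g)" using g by (rule inM_finite_supp)
  have "nabla (nabla g) = lin (\<lambda>x. nabla (nabla_b x)) g"
    unfolding nabla_def by (rule lin_lin[OF fin finite_supp_nabla_b])
  also have "\<dots> = lin (\<lambda>x. 0) g"
  proof (rule lin_cong)
    fix x assume "x \<in> supp g"
    moreover obtain k I e where "x = (k, I, e)" by (cases x)
    ultimately show "nabla (nabla_b x) = 0"
      using inM_supp_D[OF g] nabla_nabla_b by auto
  qed
  finally show ?thesis by (simp add: lin_def)
qed

lemma kernel_nabla_M11: "{f. inM 1 1 f \<and> nabla f = 0} = nabla ` {f. inM 2 2 f}"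
proof (intro set_eqI iffI)
  fix f assume "f \<in> {f. inM 1 1 f \<and> nabla f = 0}"
  then have f: "inM 1 1 f" and closed: "nabla f = 0" by auto
  have "nabla (lin homotopy f) = f"
    using nabla_lin_homotopy[OF f] closed by simp
  moreover have "inM 2 2 (lin homotopy f)"
    using f inM_homotopy_supp(1)[OF f] by (intro inM_lin inM_finite_supp)
  ultimately show "f \<in> nabla ` {f. inM 2 2 f}" by (metis image_eqI mem_Collect_eq)
next
  fix f assume "f \<in> nabla ` {f. inM 2 2 f}"
  then show "f \<in> {f. inM 1 1 f \<and> nabla f = 0}"
    using nabla_inM[of 2 2] nabla_nabla by fastforce
qed

theorem proposition6p21:
  shows "(\<exists>v0. inM 0 0 v0 \<and> v0 \<notin> nabla ` {f. inM 1 1 f} \<and>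
            (\<forall>m. inM 0 0 m \<longrightarrow> (\<exists>c. m - sc c v0 \<in> nabla ` {f. inM 1 1 f})))
       \<and> (\<forall>\<rho>. induced_action_00 \<rho> \<longrightarrow>
            (\<forall>b m. gvalid b \<longrightarrow> inM 0 0 m \<longrightarrow> \<rho> b m \<in> nabla ` {f. inM 1 1 f}))
       \<and> {f. inM 1 1 f \<and> nabla f = 0} = nabla ` {f. inM 2 2 f}"
proof (intro conjI)
  have one: "inM 0 0 one00" "one00 unit_key = 1"
    by (simp_all add: one00_def inM_bv bv_apply)
  show "\<exists>v0. inM 0 0 v0 \<and> v0 \<notin> nabla ` {f. inM 1 1 f} \<and>
      (\<forall>m. inM 0 0 m \<longrightarrow> (\<exists>c. m - sc c v0 \<in> nabla ` {f. inM 1 1 f}))"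
  proof (intro exI conjI allI impI)
    show "one00 \<notin> nabla ` {f. inM 1 1 f}"
      unfolding image_nabla_M11 augmentation_ideal_def using one by simp
    fix m assume "inM 0 0 m"
    then show "m - sc (m unit_key) one00 \<in> nabla ` {f. inM 1 1 f}"
      unfolding image_nabla_M11 augmentation_ideal_def using one inM_diff inM_sc
      by (simp add: minus_apply sc_apply)
  qed (rule one(1))
  show "\<forall>\<rho>. induced_action_00 \<rho> \<longrightarrow>
      (\<forall>b m. gvalid b \<longrightarrow> inM 0 0 m \<longrightarrow> \<rho> b m \<in> nabla ` {f. inM 1 1 f})"
    unfolding image_nabla_M11 using rho_augmentation_ideal by blast
  show "{f. inM 1 1 f \<and> nabla f = 0} = nabla ` {f. inM 2 2 f}"
    by (rule kernel_nabla_M11)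
qed

end
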